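(* Let $q$ be a prime power, let $\mathcal{H}_q$ be the Hermitian curve over $\mathbb{F}_{q^2}$, of genus $g(\mathcal{H}_q)=\frac{q(q-1)}{2}$, and let $X,T$ be fixed positive integers (security and privacy parameters). Let $L$ be an integer with $g(\mathcal{H}_q)\le L\le q^3-g(\mathcal{H}_q)$ and $L+g(\mathcal{H}_q)\equiv 0\pmod q$, and set $m=\frac{L+g(\mathcal{H}_q)}{q}$. Let $\alpha_1,\dots,\alpha_m\in\mathbb{F}_{q^2}\setminus\{0\}$ be pairwise distinct and let $P_{i,z}=(\alpha_i,\beta_{i,z})$, $i\in[m]$, $z\in[q]$, be $mq$ (distinct) affine $\mathbb{F}_{q^2}$-rational points of $\mathcal{H}_q$. If there exist $L+X+T+\frac{7q^2-3q-6}{2}+1$ $\mathbb{F}_{q^2}$-rational points of $\mathcal{H}_q$ distinct from $P_\infty$, $P_0$ and all $P_{i,z}$, then, with $N=L+X+T+3q^2-q-2$ servers, there exists an $X$-secure and $T$-private information retrieval scheme over $\mathbb{F}_{q^2}$ with rate $$\mathcal{R}^{\mathcal{H}_q}=\frac{L}{N}=1-\frac{X+T+3q^2-q-2}{N}.$$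
   Context: The Hermitian curve $\mathcal{H}_q$ is the projective non-singular curve over $\mathbb{F}_{q^2}$ with affine equation $X^{q+1}=Y^q+Y$; it has $q^3+1$ $\mathbb{F}_{q^2}$-rational points, $P_\infty$ denotes its unique point at infinity and $P_0=(0,0)$. $[n]=\{1,\dots,n\}$. An $X$-secure and $T$-private information retrieval (XSTPIR) scheme with $N$ servers: $N$ non-communicating servers store (encoded) data about $M$ independent files $s_1,\dots,s_M\in\mathbb{F}_{q^2}^L$; a user wishing to retrieve $s_\mu$ sends a query $Q_n$ to server $n$, which returns an answer $A_n$; the user must be able to recover $s_\mu$ from $A_1,\dots,A_N$; $X$-security means the data stored at any $X$ servers reveals nothing about the file contents; $T$-privacy means the queries sent to any $T$ servers reveal nothing about the index $\mu$. The rate is the ratio between the size of the desired file and the total amount of downloaded data; here it equals $L/N$ (one symbol downloaded from each server). *)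

theory Defs
  imports "HOL-Probability.Probability_Mass_Function"
begin

text \<open>Affine points of the Hermitian curve X^(q+1) = Y^q + Y over a field of order q^2
  (the field is the type 'a). The unique point at infinity is not affine.\<close>
definition hermitian_affine :: "nat \<Rightarrow> ('a::{finite,field} \<times> 'a) set" where
  "hermitian_affine q = {(x, y). x ^ (q + 1) = y ^ q + y}"

definition valid_files :: "nat \<Rightarrow> nat \<Rightarrow> (nat \<Rightarrow> 'a list) \<Rightarrow> bool" where
  "valid_files M L D \<longleftrightarrow> (\<forall>i\<in>{1..M}. length (D i) = L) \<and> (\<forall>i. i \<notin> {1..M} \<longrightarrow> D i = [])"

text \<open>An X-secure, T-private information retrieval scheme with N servers, M files of
  length L over the field 'a, in which each server returns exactly one symbol.
  srand: distribution of the storage randomness; store n D r: data stored at server n;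
  qrand: distribution of the user's private randomness; query n mu u: query to server n;
  answer n w Q: the one-symbol answer of server n from its storage w and query Q;
  decode mu u As: the user's decoder from the list of the N answers.
  Correctness is zero-error; X-security: the joint distribution of the stored data of any
  at most X servers does not depend on the files; T-privacy: the joint distribution of the
  queries to any at most T servers does not depend on the desired index.\<close>
definition XSTPIR ::
  "nat \<Rightarrow> nat \<Rightarrow> nat \<Rightarrow> nat \<Rightarrow> nat \<Rightarrow>
   'a list pmf \<Rightarrow> (nat \<Rightarrow> (nat \<Rightarrow> 'a list) \<Rightarrow> 'a list \<Rightarrow> 'a list) \<Rightarrow>
   'a list pmf \<Rightarrow> (nat \<Rightarrow> nat \<Rightarrow> 'a list \<Rightarrow> 'a list) \<Rightarrow>
   (nat \<Rightarrow> 'a list \<Rightarrow> 'a list \<Rightarrow> 'a) \<Rightarrow> (nat \<Rightarrow> 'a list \<Rightarrow> 'a list \<Rightarrow> 'a list) \<Rightarrow> bool" where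
  "XSTPIR N M L X T srand store qrand query answer decode \<longleftrightarrow>
     (\<forall>D mu r u. valid_files M L D \<and> mu \<in> {1..M} \<and> r \<in> set_pmf srand \<and> u \<in> set_pmf qrand \<longrightarrow>
        decode mu u (map (\<lambda>n. answer n (store n D r) (query n mu u)) [1..<N+1]) = D mu)
   \<and> (\<forall>S D D'. S \<subseteq> {1..N} \<and> card S \<le> X \<and> valid_files M L D \<and> valid_files M L D' \<longrightarrow>
        map_pmf (\<lambda>r n. if n \<in> S then store n D r else []) srand =
        map_pmf (\<lambda>r n. if n \<in> S then store n D' r else []) srand)
   \<and> (\<forall>S mu mu'. S \<subseteq> {1..N} \<and> card S \<le> T \<and> mu \<in> {1..M} \<and> mu' \<in> {1..M} \<longrightarrow>
        map_pmf (\<lambda>u n. if n \<in> S then query n mu u else []) qrand =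
        map_pmf (\<lambda>u n. if n \<in> S then query n mu' u else []) qrand)"

end

theory Submission
  imports Defs "HOL-Computational_Algebra.Polynomial" "HOL-Computational_Algebra.Primes"
begin

text \<open>
  File symbols are attached to the \<open>q\<close> points of the curve above each \<open>\<alpha> i\<close>, and server \<open>n\<close>
  works at another affine point \<open>R n\<close>. Stored symbols are masked by a uniformly random element
  of \<open>L((X + 2g - 1) P\<^sub>\<infinity>)\<close>, queries by one of \<open>L((T + 2g - 1) P\<^sub>\<infinity>)\<close>. A one-point
  Riemann-Roch space \<open>L(s P\<^sub>\<infinity>)\<close> interpolates arbitrary values on any \<open>s + 1 - 2g\<close> points,
  so any \<open>X\<close> (resp. \<open>T\<close>) servers see uniformly distributed masks: this gives security and
  privacy. After clearing denominators, the answers are the values at the \<open>R n\<close> of the desired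
  file's message plus a function of bounded pole order; a nonzero such function has fewer zeros
  than there are servers, so the message is determined, and at \<open>x = \<alpha> i\<close> it is a polynomial
  in \<open>y\<close> of degree below \<open>q\<close>, determined by its values at the \<open>q\<close> points above \<open>\<alpha> i\<close>.

  Both facts about \<open>L(s P\<^sub>\<infinity>)\<close> are proved without divisor theory, from the basis of monomials
  \<open>x ^ a * y ^ b\<close> with \<open>b < q\<close>: the sums of monomials over the affine points vanish below a top
  weight, the semigroup \<open>\<langle>q, q + 1\<rangle>\<close> has \<open>g\<close> gaps, and a triangular pairing bounds the
  support of any vector orthogonal to \<open>L(s P\<^sub>\<infinity>)\<close> (the dual minimum distance).
\<close>

section \<open>Finite fields\<close>

lemma card_power_eq_le:
  fixes c :: "'a::field"
  assumes "0 < n"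
  shows "card {x. x ^ n = c} \<le> n"
proof -
  let ?p = "monom 1 n + [:- c:]"
  have "degree ?p = n" using assms by (simp add: degree_add_eq_left degree_monom_eq)
  hence "card {x. poly ?p x = 0} \<le> n" using assms card_poly_roots_bound[of ?p] by fastforce
  moreover have "{x. poly ?p x = 0} = {x. x ^ n = c}" by (auto simp: poly_monom)
  ultimately show ?thesis by simp
qed

lemma card_power_add_linear_eq_le:
  fixes b c :: "'a::field"
  assumes "1 < n"
  shows "card {x. x ^ n + b * x = c} \<le> n"
proof -
  let ?p = "monom 1 n + [:- c, b:]"
  have "degree ?p = n" using assms by (simp add: degree_add_eq_left degree_monom_eq)
  hence "card {x. poly ?p x = 0} \<le> n" using assms card_poly_roots_bound[of ?p] by fastforce
  moreover have "{x. poly ?p x = 0} = {x. x ^ n + b * x = c}" by (auto simp: poly_monom algebra_simps)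
  ultimately show ?thesis by simp
qed

lemma poly_eq_0_if_card_roots:
  fixes p :: "'a::idom poly"
  assumes "inj_on f A" "degree p < card A" "\<forall>x\<in>A. poly p (f x) = 0"
  shows "p = 0"
proof (rule ccontr)
  assume "p \<noteq> 0"
  have "card A = card (f ` A)" using card_image[OF assms(1)] by simp
  also have "\<dots> \<le> card {x. poly p x = 0}"
    using assms(3) poly_roots_finite[OF \<open>p \<noteq> 0\<close>] by (intro card_mono) auto
  also have "\<dots> \<le> degree p" using card_poly_roots_bound[OF \<open>p \<noteq> 0\<close>] .
  finally show False using assms(2) by simp
qed

lemma exists_power_ne_1:
  fixes G :: "'a::{finite,field} set"
  assumes "0 < j" "j < card G"
  shows "\<exists>g\<in>G. g ^ j \<noteq> 1"
proof (rule ccontr)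
  assume "\<not> ?thesis"
  hence "card G \<le> card {x::'a. x ^ j = 1}" by (intro card_mono) auto
  thus False using card_power_eq_le[OF assms(1), of "1::'a"] assms(2) by linarith
qed

lemma sum_power_eq_0_if_scaling_invariant:
  fixes K :: "'a::field set"
  assumes "g \<noteq> 0" "g ^ j \<noteq> 1" "\<And>t. t \<in> K \<Longrightarrow> g * t \<in> K" "\<And>t. t \<in> K \<Longrightarrow> t / g \<in> K"
  shows "(\<Sum>t\<in>K. t ^ j) = 0"
proof -
  have "(\<Sum>t\<in>K. (g * t) ^ j) = (\<Sum>t\<in>K. t ^ j)"
    by (rule sum.reindex_bij_witness[where i="\<lambda>t. t / g" and j="\<lambda>t. g * t"]) (use assms in auto)
  moreover have "(g ^ j - 1) * (\<Sum>t\<in>K. t ^ j) = (\<Sum>t\<in>K. (g * t) ^ j) - (\<Sum>t\<in>K. t ^ j)"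
    by (simp add: left_diff_distrib sum_distrib_left power_mult_distrib sum_subtractf)
  ultimately have "(g ^ j - 1) * (\<Sum>t\<in>K. t ^ j) = 0" by simp
  thus ?thesis using assms(2) by simp
qed

lemma of_nat_CARD_eq_0: "of_nat CARD('a::{finite,ring_1}) = (0::'a)"
proof -
  have "(\<Sum>c\<in>UNIV. c + (1::'a)) = (\<Sum>c\<in>UNIV. c)"
    by (rule sum.reindex_bij_witness[where i="\<lambda>c. c - 1" and j="\<lambda>c. c + 1"]) auto
  thus ?thesis by (simp add: sum.distrib)
qed

lemma power_CARD_minus_1:
  fixes x :: "'a::{finite,field}"
  assumes "x \<noteq> 0"
  shows "x ^ (CARD('a) - 1) = 1"
proof -
  let ?U = "UNIV - {0::'a}"
  have "(\<Prod>c\<in>?U. x * c) = (\<Prod>c\<in>?U. c)"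
    by (rule prod.reindex_bij_witness[where i="\<lambda>c. c / x" and j="\<lambda>c. x * c"]) (use assms in auto)
  moreover have "(\<Prod>c\<in>?U. x * c) = x ^ (CARD('a) - 1) * (\<Prod>c\<in>?U. c)"
    by (simp add: prod.distrib card_Diff_singleton)
  ultimately show ?thesis by simp
qed

lemma power_CARD_eq_self: "x ^ CARD('a) = (x::'a::{finite,field})"
proof (cases "x = 0")
  case False
  have "CARD('a) = Suc (CARD('a) - 1)" using finite_UNIV_card_ge_0[where 'a='a] by simp
  thus ?thesis using power_CARD_minus_1[OF False] by (metis mult.right_neutral power_Suc)
qed simp

lemma two_le_CARD_field: "2 \<le> CARD('a::{finite,field})"
  using card_mono[of UNIV "{0::'a, 1}"] by simp

lemma sum_UNIV_power_eq_0:
  assumes "j < CARD('a::{finite,field}) - 1"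
  shows "(\<Sum>c::'a\<in>UNIV. c ^ j) = 0"
proof (cases "j = 0")
  case True thus ?thesis using of_nat_CARD_eq_0[where 'a='a] by simp
next
  case False
  obtain g :: 'a where "g \<in> UNIV - {0}" "g ^ j \<noteq> 1"
    using exists_power_ne_1[of j "UNIV - {0::'a}"] False assms by (auto simp: card_Diff_singleton)
  thus ?thesis by (intro sum_power_eq_0_if_scaling_invariant) auto
qed

section \<open>Linear algebra over a field\<close>

lemma triangular_pairing_eliminate:
  fixes a b :: "'i::linorder \<Rightarrow> 'p \<Rightarrow> 'a::field"
  assumes "finite Z" "P \<notin> Z" "i0 \<in> I" "a i0 P \<noteq> 0" "\<forall>i\<in>I. i < i0 \<longrightarrow> a i P = 0"
    and tri: "\<forall>i\<in>I. \<forall>j\<in>I. i < j \<longrightarrow> (\<Sum>Q\<in>insert P Z. a i Q * b j Q) = 0"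
    and diag: "\<forall>i\<in>I. (\<Sum>Q\<in>insert P Z. a i Q * b i Q) \<noteq> 0"
  defines "a' \<equiv> \<lambda>i Q. a i Q - a i P / a i0 P * a i0 Q"
  shows "\<forall>i\<in>I - {i0}. \<forall>j\<in>I - {i0}. i < j \<longrightarrow> (\<Sum>Q\<in>Z. a' i Q * b j Q) = 0"
    and "\<forall>i\<in>I - {i0}. (\<Sum>Q\<in>Z. a' i Q * b i Q) \<noteq> 0"
proof -
  let ?S = "\<lambda>i j. \<Sum>Q\<in>insert P Z. a i Q * b j Q"
  have S': "(\<Sum>Q\<in>Z. a' i Q * b j Q) = ?S i j - a i P / a i0 P * ?S i0 j" for i j
  proof -
    have "(\<Sum>Q\<in>Z. a' i Q * b j Q) = (\<Sum>Q\<in>insert P Z. a' i Q * b j Q)"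
      using assms(1,2,4) by (simp add: a'_def)
    also have "\<dots> = ?S i j - a i P / a i0 P * ?S i0 j"
      unfolding a'_def by (simp add: algebra_simps sum_subtractf sum_distrib_left)
    finally show ?thesis .
  qed
  have correction: "a i P / a i0 P * ?S i0 j = 0" if "i \<in> I - {i0}" "j \<in> I - {i0}" "i \<le> j" for i j
  proof (cases "i < i0")
    case True thus ?thesis using assms(5) that by simp
  next
    case False
    hence "i0 < j" using that by auto
    thus ?thesis using tri assms(3) that by auto
  qed
  show "\<forall>i\<in>I - {i0}. \<forall>j\<in>I - {i0}. i < j \<longrightarrow> (\<Sum>Q\<in>Z. a' i Q * b j Q) = 0"
    using S' correction tri by auto
  show "\<forall>i\<in>I - {i0}. (\<Sum>Q\<in>Z. a' i Q * b i Q) \<noteq> 0"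
    using S' correction diag by auto
qed

text \<open>A triangular pairing with nonzero diagonal shows that the \<open>a i\<close> restricted to \<open>Z\<close> are
  linearly independent; we count them by Gaussian elimination, one point of \<open>Z\<close> at a time.\<close>
lemma card_le_if_triangular_pairing:
  fixes a b :: "'i::linorder \<Rightarrow> 'p \<Rightarrow> 'a::field"
  assumes "finite Z" "finite I"
    "\<forall>i\<in>I. \<forall>j\<in>I. i < j \<longrightarrow> (\<Sum>P\<in>Z. a i P * b j P) = 0"
    "\<forall>i\<in>I. (\<Sum>P\<in>Z. a i P * b i P) \<noteq> 0"
  shows "card I \<le> card Z"
  using assms
proof (induction Z arbitrary: I a rule: finite_induct)
  case empty thus ?case by auto
next
  case (insert P Z)
  show ?case
  proof (cases "\<forall>i\<in>I. a i P = 0")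
    case True
    hence "(\<Sum>Q\<in>insert P Z. a i Q * b j Q) = (\<Sum>Q\<in>Z. a i Q * b j Q)" if "i \<in> I" for i j
      using that insert(1,2) by simp
    hence "card I \<le> card Z" using insert.prems by (intro insert.IH) auto
    thus ?thesis using insert(1,2) by simp
  next
    case False
    define i0 where "i0 = Min {i\<in>I. a i P \<noteq> 0}"
    have fin: "finite {i\<in>I. a i P \<noteq> 0}" using insert.prems(1) by simp
    have "{i\<in>I. a i P \<noteq> 0} \<noteq> {}" using False by blast
    hence "i0 \<in> {i\<in>I. a i P \<noteq> 0}" unfolding i0_def by (rule Min_in[OF fin])
    hence i0: "i0 \<in> I" "a i0 P \<noteq> 0" by simp_all
    have below: "\<forall>i\<in>I. i < i0 \<longrightarrow> a i P = 0"
    proof (intro ballI impI)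
      fix i assume "i \<in> I" "i < i0"
      show "a i P = 0"
      proof (rule ccontr)
        assume "a i P \<noteq> 0"
        hence "i0 \<le> i" unfolding i0_def using \<open>i \<in> I\<close> by (intro Min_le[OF fin]) simp
        thus False using \<open>i < i0\<close> by simp
      qed
    qed
    have "card (I - {i0}) \<le> card Z"
      using triangular_pairing_eliminate[OF insert(1,2) i0 below insert.prems(2,3)] insert.prems(1)
      by (intro insert.IH) auto
    moreover have "card I = Suc (card (I - {i0}))" using i0 insert.prems(1) by (metis card_Suc_Diff1)
    ultimately show ?thesis using insert(1,2) by simp
  qed
qed

lemma trivial_annihilator_eliminate:
  fixes e :: "'j \<Rightarrow> 'p \<Rightarrow> 'a::field"
  assumes "finite S" "P0 \<notin> S" "e j0 P0 \<noteq> 0"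
    and triv: "\<forall>w. (\<forall>j\<in>J. (\<Sum>P\<in>insert P0 S. w P * e j P) = 0) \<longrightarrow> (\<forall>P\<in>insert P0 S. w P = 0)"
  defines "e' \<equiv> \<lambda>j Q. e j Q - e j P0 / e j0 P0 * e j0 Q"
  shows "\<forall>w. (\<forall>j\<in>J. (\<Sum>P\<in>S. w P * e' j P) = 0) \<longrightarrow> (\<forall>P\<in>S. w P = 0)"
proof (intro allI impI)
  fix w0 assume w0: "\<forall>j\<in>J. (\<Sum>P\<in>S. w0 P * e' j P) = 0"
  let ?s = "\<Sum>P\<in>S. w0 P * e j0 P"
  define w where "w Q = (if Q = P0 then - ?s / e j0 P0 else w0 Q)" for Q
  have "(\<Sum>P\<in>insert P0 S. w P * e j P) = 0" if "j \<in> J" for j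
  proof -
    have "(\<Sum>P\<in>S. w0 P * e j P) = (\<Sum>P\<in>S. w0 P * e' j P) + e j P0 / e j0 P0 * ?s"
      unfolding e'_def right_diff_distrib sum_subtractf by (simp add: sum_distrib_left mult_ac)
    moreover have "(\<Sum>P\<in>S. w P * e j P) = (\<Sum>P\<in>S. w0 P * e j P)"
      unfolding w_def using assms(2) by (intro sum.cong) auto
    ultimately show ?thesis using w0 that assms(1-3) by (simp add: w_def)
  qed
  hence "\<forall>P\<in>insert P0 S. w P = 0" using triv by blast
  thus "\<forall>P\<in>S. w0 P = 0" unfolding w_def using assms(2) by (metis insertCI)
qed

lemma exists_nonzero_if_trivial_annihilator:
  fixes e :: "'j \<Rightarrow> 'p \<Rightarrow> 'a::field"
  assumes "finite S" "P0 \<in> S" "\<forall>w. (\<forall>j\<in>J. (\<Sum>P\<in>S. w P * e j P) = 0) \<longrightarrow> (\<forall>P\<in>S. w P = 0)"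
  shows "\<exists>j\<in>J. e j P0 \<noteq> 0"
proof (rule ccontr)
  assume none: "\<not> ?thesis"
  define w :: "'p \<Rightarrow> 'a" where "w P = (if P = P0 then 1 else 0)" for P
  have "(\<Sum>P\<in>S. w P * e j P) = 0" if "j \<in> J" for j
  proof -
    have "(\<Sum>P\<in>S. w P * e j P) = (\<Sum>P\<in>S. if P = P0 then e j P else 0)"
      by (rule sum.cong) (auto simp: w_def)
    thus ?thesis using none that assms(1,2) by simp
  qed
  hence "w P0 = 0" using assms(2,3) by blast
  thus False by (simp add: w_def)
qed

text \<open>Duality between a space of functions on \<open>S\<close> and its annihilator, again by elimination
  one point at a time.\<close>
lemma interpolation_if_trivial_annihilator:
  fixes e :: "'j \<Rightarrow> 'p \<Rightarrow> 'a::field"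
  assumes "finite S" "finite J" "\<forall>w. (\<forall>j\<in>J. (\<Sum>P\<in>S. w P * e j P) = 0) \<longrightarrow> (\<forall>P\<in>S. w P = 0)"
  shows "\<exists>c. \<forall>P\<in>S. t P = (\<Sum>j\<in>J. c j * e j P)"
  using assms
proof (induction S arbitrary: e t rule: finite_induct)
  case (insert P0 S)
  obtain j0 where j0: "j0 \<in> J" "e j0 P0 \<noteq> 0"
    using exists_nonzero_if_trivial_annihilator[OF _ _ insert.prems(2)] insert(1) by blast
  define e' where "e' = (\<lambda>j Q. e j Q - e j P0 / e j0 P0 * e j0 Q)"
  have "\<forall>w. (\<forall>j\<in>J. (\<Sum>P\<in>S. w P * e' j P) = 0) \<longrightarrow> (\<forall>P\<in>S. w P = 0)"
    unfolding e'_def by (rule trivial_annihilator_eliminate[OF insert(1,2) j0(2) insert.prems(2)])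
  from insert.IH[OF insert.prems(1) this, of "\<lambda>Q. t Q - t P0 / e j0 P0 * e j0 Q"]
  obtain c' where c': "\<forall>Q\<in>S. t Q - t P0 / e j0 P0 * e j0 Q = (\<Sum>j\<in>J. c' j * e' j Q)"
    by blast
  define k where "k = t P0 / e j0 P0 - (\<Sum>j\<in>J. c' j * e j P0 / e j0 P0)"
  define c where "c j = c' j + (if j = j0 then k else 0)" for j
  have c: "(\<Sum>j\<in>J. c j * e j Q) = (\<Sum>j\<in>J. c' j * e' j Q) + t P0 / e j0 P0 * e j0 Q" for Q
  proof -
    have "(\<Sum>j\<in>J. (if j = j0 then k else 0) * e j Q) = (\<Sum>j\<in>J. if j = j0 then k * e j Q else 0)"
      by (rule sum.cong) auto
    hence "(\<Sum>j\<in>J. c j * e j Q) = (\<Sum>j\<in>J. c' j * e j Q) + k * e j0 Q"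
      using j0(1) insert.prems(1) by (simp add: c_def distrib_right sum.distrib)
    also have "(\<Sum>j\<in>J. c' j * e j Q)
        = (\<Sum>j\<in>J. c' j * e' j Q) + (\<Sum>j\<in>J. c' j * e j P0 / e j0 P0) * e j0 Q"
      unfolding e'_def right_diff_distrib sum_subtractf by (simp add: sum_distrib_left mult_ac)
    finally show ?thesis unfolding k_def by (simp add: algebra_simps)
  qed
  show ?case
  proof (intro exI ballI)
    fix Q assume Q: "Q \<in> insert P0 S"
    show "t Q = (\<Sum>j\<in>J. c j * e j Q)"
    proof (cases "Q = P0")
      case True
      have "(\<Sum>j\<in>J. c' j * e' j P0) = 0" unfolding e'_def using j0(2) by simp
      thus ?thesis using c[of P0] j0(2) True by simp
    next
      case False
      hence "Q \<in> S" using Q by simp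
      thus ?thesis using c[of Q] c' by (simp add: diff_eq_eq)
    qed
  qed
qed simp

section \<open>Uniform masks\<close>

definition translate_on :: "'i set \<Rightarrow> ('i \<Rightarrow> 'a::ab_group_add) \<Rightarrow> ('i \<Rightarrow> 'a) \<Rightarrow> 'i \<Rightarrow> 'a" where
  "translate_on I \<delta> Z = (\<lambda>\<tau>. if \<tau> \<in> I then Z \<tau> + \<delta> \<tau> else undefined)"

lemma bij_betw_translate_on: "bij_betw (translate_on I \<delta>) (PiE I (\<lambda>_. UNIV)) (PiE I (\<lambda>_. UNIV))"
proof (rule bij_betw_byWitness[where f' = "translate_on I (\<lambda>\<tau>. - \<delta> \<tau>)"])
  have "translate_on I (\<lambda>\<tau>. - d \<tau>) (translate_on I d Z) = Z" if "Z \<in> PiE I (\<lambda>_. UNIV)" for d Z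
    by (rule ext) (use PiE_arb[OF that] in \<open>simp add: translate_on_def\<close>)
  from this[of _ \<delta>] this[of _ "\<lambda>\<tau>. - \<delta> \<tau>"]
  show "\<forall>Z\<in>PiE I (\<lambda>_. UNIV). translate_on I (\<lambda>\<tau>. - \<delta> \<tau>) (translate_on I \<delta> Z) = Z"
    "\<forall>Z\<in>PiE I (\<lambda>_. UNIV). translate_on I \<delta> (translate_on I (\<lambda>\<tau>. - \<delta> \<tau>) Z) = Z"
    by simp_all
qed (auto simp: translate_on_def PiE_iff extensional_def)

text \<open>The one-time pad: uniform randomness is invariant under translation.\<close>
lemma map_pmf_uniform_eq_if_translate:
  fixes F G :: "('i \<Rightarrow> 'a::{finite,ab_group_add}) \<Rightarrow> 'b"
  assumes "finite I" and "\<And>Z. Z \<in> PiE I (\<lambda>_. UNIV) \<Longrightarrow> F Z = G (translate_on I \<delta> Z)"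
  shows "map_pmf F (pmf_of_set (PiE I (\<lambda>_. UNIV))) = map_pmf G (pmf_of_set (PiE I (\<lambda>_. UNIV)))"
proof -
  let ?A = "PiE I (\<lambda>_. UNIV :: 'a set)"
  have fin: "finite ?A" and ne: "?A \<noteq> {}" using assms(1) by (auto intro: finite_PiE simp: PiE_eq_empty_iff)
  have "map_pmf F (pmf_of_set ?A) = map_pmf (\<lambda>Z. G (translate_on I \<delta> Z)) (pmf_of_set ?A)"
    using assms(2) set_pmf_of_set[OF ne fin] by (intro map_pmf_cong) auto
  also have "\<dots> = map_pmf G (map_pmf (translate_on I \<delta>) (pmf_of_set ?A))"
    by (simp add: map_pmf_comp)
  also have "map_pmf (translate_on I \<delta>) (pmf_of_set ?A) = pmf_of_set ?A"
    using map_pmf_of_set_inj[OF bij_betw_imp_inj_on[OF bij_betw_translate_on[of I \<delta>]] ne fin]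
      bij_betw_imp_surj_on[OF bij_betw_translate_on[of I \<delta>]] by simp
  finally show ?thesis .
qed

definition enumeration :: "'i set \<Rightarrow> 'i list" where
  "enumeration A = (SOME xs. set xs = A)"

lemma set_enumeration: "finite A \<Longrightarrow> set (enumeration A) = A"
  unfolding enumeration_def by (rule someI_ex) (rule finite_list)

definition lookup :: "'i list \<Rightarrow> 'a list \<Rightarrow> 'i \<Rightarrow> 'a" where
  "lookup xs r = (\<lambda>\<tau>. the (map_of (zip xs r) \<tau>))"

lemma lookup_map: "\<tau> \<in> set xs \<Longrightarrow> lookup xs (map Z xs) \<tau> = Z \<tau>"
  unfolding lookup_def by (simp add: map_of_zip_map)

lemma inj_on_snd_if_fst_eq:
  assumes "inj_on (\<lambda>(i, z). P i z) (I \<times> Z)" "\<forall>z\<in>Z. fst (P i z) = a" "i \<in> I"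
  shows "inj_on (\<lambda>z. snd (P i z)) Z"
proof (rule inj_onI)
  fix z z' assume "z \<in> Z" "z' \<in> Z" "snd (P i z) = snd (P i z')"
  hence "P i z = P i z'" using assms(2) by (simp add: prod_eq_iff)
  thus "z = z'" using inj_onD[OF assms(1), of "(i, z)" "(i, z')"] assms(3) \<open>z \<in> Z\<close> \<open>z' \<in> Z\<close> by simp
qed

section \<open>The Hermitian curve\<close>

locale hermitian_curve =
  fixes q :: nat and field_type :: "'a::{finite,field} itself"
  assumes prime_power_q: "\<exists>p k. prime p \<and> k > 0 \<and> q = p ^ k"
    and card_field: "CARD('a) = q ^ 2"
begin

abbreviation H :: "('a \<times> 'a) set" where "H \<equiv> hermitian_affine q"

lemma q_ge_2: "2 \<le> q"
proof -
  obtain p k where "prime p" "k > 0" "q = p ^ k" using prime_power_q by auto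
  thus ?thesis using prime_ge_2_nat[of p] self_le_power[of p k] by simp
qed

lemma q_pos: "0 < q" using q_ge_2 by simp

lemma of_nat_q_eq_0: "(of_nat q :: 'a) = 0"
  using of_nat_CARD_eq_0[where 'a='a] card_field by simp

lemma q_power_of_CHAR: "\<exists>k. q = CHAR('a) ^ k"
proof -
  obtain p k where pk: "prime p" "k > 0" "q = p ^ k" using prime_power_q by auto
  have "(of_nat p :: 'a) = 0" using of_nat_q_eq_0 pk by simp
  hence "CHAR('a) dvd p" by (simp add: of_nat_eq_0_iff_char_dvd)
  hence "CHAR('a) = p" using pk(1) CHAR_not_1[where 'a='a] unfolding prime_nat_iff by auto
  thus ?thesis using pk by auto
qed

lemma power_q_add: "(x + y) ^ q = x ^ q + (y ^ q :: 'a)"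
proof -
  have "prime CHAR('a)"
    using prime_CHAR_semidom finite_imp_CHAR_pos[OF finite_class.finite_UNIV] by blast
  thus ?thesis using q_power_of_CHAR freshmans_dream' by blast
qed

lemma power_q_diff: "(x - y) ^ q = x ^ q - (y ^ q :: 'a)"
  using power_q_add[of "x - y" y] by (simp add: algebra_simps)

lemma power_q_power_q: "(x ^ q) ^ q = (x :: 'a)"
  using power_CARD_eq_self[of x] card_field by (simp add: power2_eq_square power_mult)

text \<open>The subfield \<open>\<bbbF>\<^sub>q\<close> and the fibres of the trace map \<open>y \<mapsto> y ^ q + y\<close> onto it;
  the curve is the union over all \<open>x\<close> of the fibres over the norm \<open>x ^ (q + 1)\<close>.\<close>
definition Fq :: "'a set" where "Fq = {z. z ^ q = z}"
definition trace_fibre :: "'a \<Rightarrow> 'a set" where "trace_fibre c = {y. y ^ q + y = c}"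

lemma trace_in_Fq: "y ^ q + y \<in> Fq"
  unfolding Fq_def by (simp add: power_q_add power_q_power_q add.commute)

lemma norm_in_Fq: "x ^ (q + 1) \<in> Fq"
proof -
  have "(x ^ q * x) ^ q = x * x ^ q" by (simp add: power_mult_distrib power_q_power_q)
  thus ?thesis unfolding Fq_def by (simp add: mult.commute)
qed

lemma card_Fq_le: "card Fq \<le> q"
  using card_power_add_linear_eq_le[of q "-1" "0::'a"] q_ge_2 unfolding Fq_def by simp

lemma card_trace_fibre_le: "card (trace_fibre c) \<le> q"
  using card_power_add_linear_eq_le[of q 1 c] q_ge_2 unfolding trace_fibre_def by simp

text \<open>The at most \<open>q\<close> fibres over \<open>\<bbbF>\<^sub>q\<close>, of at most \<open>q\<close> elements each, partition the
  \<open>q ^ 2\<close> field elements, so all these bounds are attained.\<close>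
lemma card_Fq_and_trace_fibres: "card Fq = q \<and> (\<forall>c\<in>Fq. card (trace_fibre c) = q)"
proof -
  have "UNIV = (\<Union>c\<in>Fq. trace_fibre c)"
    using trace_in_Fq unfolding trace_fibre_def by auto
  hence "q * q = card (\<Union>c\<in>Fq. trace_fibre c)" using card_field by (simp add: power2_eq_square)
  also have "\<dots> = (\<Sum>c\<in>Fq. card (trace_fibre c))"
    by (rule card_UN_disjoint) (auto simp: trace_fibre_def)
  finally have sum_card: "(\<Sum>c\<in>Fq. card (trace_fibre c)) = q * q" by simp
  hence "q * q \<le> card Fq * q"
    using sum_mono[of Fq "\<lambda>c. card (trace_fibre c)" "\<lambda>_. q"] card_trace_fibre_le by simp
  hence card_eq: "card Fq = q" using card_Fq_le q_pos by simp
  have "card (trace_fibre c) = q" if "c \<in> Fq" for c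
  proof (rule ccontr)
    assume "card (trace_fibre c) \<noteq> q"
    hence "(\<Sum>c\<in>Fq. card (trace_fibre c)) < (\<Sum>c\<in>Fq. q)"
      using that card_trace_fibre_le by (intro sum_strict_mono_ex1) (auto intro!: bexI[of _ c] le_neq_implies_less)
    thus False using sum_card card_eq by simp
  qed
  thus ?thesis using card_eq by simp
qed

lemma card_Fq: "card Fq = q"
  using card_Fq_and_trace_fibres by simp

lemma card_trace_fibre: "c \<in> Fq \<Longrightarrow> card (trace_fibre c) = q"
  using card_Fq_and_trace_fibres by simp

lemma trace_fibre_translate:
  assumes "y0 \<in> trace_fibre c"
  shows "trace_fibre c = (+) y0 ` trace_fibre 0"
proof (intro set_eqI iffI)
  fix y assume "y \<in> trace_fibre c"
  hence "y - y0 \<in> trace_fibre 0"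
    using assms unfolding trace_fibre_def by (simp add: power_q_diff algebra_simps)
  thus "y \<in> (+) y0 ` trace_fibre 0" by (intro image_eqI[where x="y - y0"]) auto
qed (use assms in \<open>auto simp: trace_fibre_def power_q_add algebra_simps\<close>)

lemma trace_kernel_power_q_minus_1:
  assumes "t \<in> trace_fibre 0" "t \<noteq> 0"
  shows "t ^ (q - 1) = -1"
proof -
  have "t * t ^ (q - 1) = t ^ q" using q_pos by (metis Suc_diff_1 power_Suc)
  also have "\<dots> = t * (-1)" using assms(1) unfolding trace_fibre_def by (simp add: eq_neg_iff_add_eq_0)
  finally show ?thesis using assms(2) mult_left_cancel by blast
qed

text \<open>The kernel of the trace is an \<open>\<bbbF>\<^sub>q\<close>-subspace, so it is invariant under scaling by
  \<open>\<bbbF>\<^sub>q - {0}\<close>, which contains some \<open>g\<close> with \<open>g ^ j \<noteq> 1\<close> when \<open>0 < j < q - 1\<close>.\<close>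
lemma sum_trace_kernel_power:
  assumes "j \<le> q - 1"
  shows "(\<Sum>t\<in>trace_fibre 0. t ^ j) = (if j = q - 1 then 1 else 0)"
proof -
  let ?K = "trace_fibre 0"
  have "0 \<in> ?K" unfolding trace_fibre_def using q_pos by simp
  have card_K: "card ?K = q" using card_trace_fibre[of 0] unfolding Fq_def using q_pos by simp
  consider "j = q - 1" | "j = 0" "j \<noteq> q - 1" | "0 < j" "j < q - 1" using assms by linarith
  thus ?thesis
  proof cases
    case 1
    have "t ^ j = -1" if "t \<in> ?K - {0}" for t
      using trace_kernel_power_q_minus_1 that 1 by blast
    hence "(\<Sum>t\<in>?K - {0}. t ^ j) = - of_nat (q - 1)"
      using \<open>0 \<in> ?K\<close> card_K by (simp add: card_Diff_singleton)
    moreover have "(\<Sum>t\<in>?K. t ^ j) = (\<Sum>t\<in>?K - {0}. t ^ j)"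
      using 1 q_ge_2 by (intro sum.mono_neutral_right) auto
    ultimately show ?thesis using 1 q_pos of_nat_q_eq_0 by (simp add: of_nat_diff)
  next
    case 2 thus ?thesis using card_K of_nat_q_eq_0 by simp
  next
    case 3
    have "j < card (Fq - {0})" using 3 card_Fq \<open>0 \<in> ?K\<close> by (simp add: card_Diff_singleton Fq_def q_pos)
    then obtain g where g: "g \<in> Fq - {0}" "g ^ j \<noteq> 1" using exists_power_ne_1 3 by blast
    have "(\<Sum>t\<in>?K. t ^ j) = 0"
    proof (rule sum_power_eq_0_if_scaling_invariant[OF _ g(2)])
      show "g * t \<in> ?K" "t / g \<in> ?K" if "t \<in> ?K" for t
        using g that unfolding trace_fibre_def Fq_def
        by (auto simp: power_mult_distrib power_divide distrib_left[symmetric] add_divide_distrib[symmetric])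
    qed (use g in auto)
    thus ?thesis using 3 by simp
  qed
qed

lemma sum_trace_fibre_power:
  assumes "c \<in> Fq" "b < q"
  shows "(\<Sum>y\<in>trace_fibre c. y ^ b) = (if b = q - 1 then 1 else 0)"
proof -
  obtain y0 where y0: "y0 \<in> trace_fibre c"
    using card_trace_fibre[OF assms(1)] q_pos by (metis card.empty ex_in_conv less_irrefl)
  have "(\<Sum>y\<in>trace_fibre c. y ^ b) = (\<Sum>t\<in>trace_fibre 0. (y0 + t) ^ b)"
    by (simp add: trace_fibre_translate[OF y0] sum.reindex)
  also have "\<dots> = (\<Sum>k\<le>b. of_nat (b choose k) * y0 ^ k * (\<Sum>t\<in>trace_fibre 0. t ^ (b - k)))"
    by (simp add: binomial_ring sum_distrib_left mult.assoc sum.swap[of _ "trace_fibre 0"])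
  also have "\<dots> = (\<Sum>k\<in>{0}. of_nat (b choose k) * y0 ^ k * (if b - k = q - 1 then 1 else 0))"
    using assms by (intro sum.mono_neutral_cong_right) (auto simp: sum_trace_kernel_power)
  finally show ?thesis using assms by simp
qed

lemma hermitian_affine_Sigma: "H = Sigma UNIV (\<lambda>x. trace_fibre (x ^ (q + 1)))"
  unfolding hermitian_affine_def trace_fibre_def by auto

lemma card_hermitian_affine: "card H = q ^ 3"
proof -
  have "card H = (\<Sum>x\<in>(UNIV::'a set). card (trace_fibre (x ^ (q + 1))))"
    unfolding hermitian_affine_Sigma by (rule card_SigmaI) auto
  also have "\<dots> = (\<Sum>x\<in>(UNIV::'a set). q)" by (simp only: card_trace_fibre[OF norm_in_Fq])
  finally show ?thesis using card_field by (simp add: power2_eq_square power3_eq_cube)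
qed

lemma sum_hermitian_affine:
  "(\<Sum>P\<in>H. f P) = (\<Sum>x\<in>UNIV. \<Sum>y\<in>trace_fibre (x ^ (q + 1)). f (x, y))"
  unfolding hermitian_affine_Sigma by (simp add: sum.Sigma)

lemma sum_hermitian_affine_monomial:
  assumes "b < q"
  shows "(\<Sum>P\<in>H. fst P ^ a * snd P ^ b) = (if b = q - 1 then (\<Sum>x\<in>UNIV. x ^ a) else 0)"
  using sum_trace_fibre_power[OF norm_in_Fq assms]
  by (simp add: sum_hermitian_affine flip: sum_distrib_left)

section \<open>Riemann-Roch spaces of multiples of the point at infinity\<close>

text \<open>\<open>x\<close> and \<open>y\<close> have pole orders \<open>q\<close> and \<open>q + 1\<close> at the point at infinity, and the
  monomials \<open>x ^ a * y ^ b\<close> with \<open>b < q\<close> and weight at most \<open>s\<close> form a basis of the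
  Riemann-Roch space \<open>L(s P\<^sub>\<infinity>)\<close>. \<open>RR s\<close> is the set of functions whose restriction to the
  affine points agrees with an element of that space.\<close>
definition weight :: "nat \<times> nat \<Rightarrow> nat" where
  "weight \<mu> = q * fst \<mu> + (q + 1) * snd \<mu>"

definition monomials :: "nat \<Rightarrow> (nat \<times> nat) set" where
  "monomials s = {\<mu>. snd \<mu> < q \<and> weight \<mu> \<le> s}"

definition monomial :: "nat \<times> nat \<Rightarrow> 'a \<times> 'a \<Rightarrow> 'a" where
  "monomial \<mu> P = fst P ^ fst \<mu> * snd P ^ snd \<mu>"

definition RR :: "nat \<Rightarrow> ('a \<times> 'a \<Rightarrow> 'a) set" where
  "RR s = {f. \<exists>c. \<forall>P\<in>H. f P = (\<Sum>\<mu>\<in>monomials s. c \<mu> * monomial \<mu> P)}"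

lemma finite_monomials: "finite (monomials s)"
proof (rule finite_subset)
  show "monomials s \<subseteq> {..s} \<times> {..<q}"
  proof
    fix \<mu> assume "\<mu> \<in> monomials s"
    hence "snd \<mu> < q" "q * fst \<mu> \<le> s" unfolding monomials_def weight_def by auto
    moreover have "fst \<mu> \<le> q * fst \<mu>" using q_pos by simp
    ultimately have "fst \<mu> \<le> s" by linarith
    thus "\<mu> \<in> {..s} \<times> {..<q}" using \<open>snd \<mu> < q\<close> by (simp add: mem_Times_iff)
  qed
qed simp

lemma weight_add: "weight (\<mu> + \<nu>) = weight \<mu> + weight \<nu>"
  unfolding weight_def by (simp add: algebra_simps)

lemma monomial_mult: "monomial \<mu> P * monomial \<nu> P = monomial (\<mu> + \<nu>) P"
  unfolding monomial_def by (simp add: power_add algebra_simps)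

lemma RR_cong: "f \<in> RR s \<Longrightarrow> (\<And>P. P \<in> H \<Longrightarrow> f P = g P) \<Longrightarrow> g \<in> RR s"
  unfolding RR_def by auto

lemma RR_mono:
  assumes "s \<le> t"
  shows "RR s \<subseteq> RR t"
proof
  fix f assume "f \<in> RR s"
  then obtain c where c: "\<forall>P\<in>H. f P = (\<Sum>\<mu>\<in>monomials s. c \<mu> * monomial \<mu> P)"
    unfolding RR_def by auto
  have "monomials s \<subseteq> monomials t" using assms unfolding monomials_def by auto
  hence "(\<Sum>\<mu>\<in>monomials t. (if \<mu> \<in> monomials s then c \<mu> else 0) * monomial \<mu> P)
       = (\<Sum>\<mu>\<in>monomials s. c \<mu> * monomial \<mu> P)" for P
    by (intro sum.mono_neutral_cong_right finite_monomials) auto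
  thus "f \<in> RR t" using c unfolding RR_def by (auto intro!: exI[of _ "\<lambda>\<mu>. if \<mu> \<in> monomials s then c \<mu> else 0"])
qed

lemma RR_zero: "(\<lambda>P. 0) \<in> RR s"
  unfolding RR_def by (auto intro!: exI[of _ "\<lambda>_. 0"])

lemma RR_add:
  assumes "f \<in> RR s" "g \<in> RR s"
  shows "(\<lambda>P. f P + g P) \<in> RR s"
proof -
  obtain c d where "\<forall>P\<in>H. f P = (\<Sum>\<mu>\<in>monomials s. c \<mu> * monomial \<mu> P)"
    "\<forall>P\<in>H. g P = (\<Sum>\<mu>\<in>monomials s. d \<mu> * monomial \<mu> P)"
    using assms unfolding RR_def by auto
  thus ?thesis unfolding RR_def
    by (auto intro!: exI[of _ "\<lambda>\<mu>. c \<mu> + d \<mu>"] simp: sum.distrib algebra_simps)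
qed

lemma RR_scale:
  assumes "f \<in> RR s"
  shows "(\<lambda>P. a * f P) \<in> RR s"
proof -
  obtain c where "\<forall>P\<in>H. f P = (\<Sum>\<mu>\<in>monomials s. c \<mu> * monomial \<mu> P)"
    using assms unfolding RR_def by auto
  thus ?thesis unfolding RR_def
    by (auto intro!: exI[of _ "\<lambda>\<mu>. a * c \<mu>"] simp: sum_distrib_left algebra_simps)
qed

lemma RR_diff: "f \<in> RR s \<Longrightarrow> g \<in> RR s \<Longrightarrow> (\<lambda>P. f P - g P) \<in> RR s"
  using RR_add[of f s "\<lambda>P. - 1 * g P"] RR_scale[of g s "- 1"] by simp

lemma RR_sum: "(\<And>i. i \<in> A \<Longrightarrow> f i \<in> RR s) \<Longrightarrow> (\<lambda>P. \<Sum>i\<in>A. f i P) \<in> RR s"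
  by (induction A rule: infinite_finite_induct) (auto simp: RR_zero RR_add)

lemma standard_monomial_in_RR:
  assumes "snd \<mu> < q"
  shows "monomial \<mu> \<in> RR (weight \<mu>)"
proof -
  have "\<mu> \<in> monomials (weight \<mu>)" using assms unfolding monomials_def by simp
  hence "(\<Sum>\<nu>\<in>monomials (weight \<mu>). (if \<nu> = \<mu> then 1 else 0) * monomial \<nu> P) = monomial \<mu> P" for P
    by (simp add: finite_monomials if_distrib[of "\<lambda>c. c * _"] cong: if_cong)
  thus ?thesis unfolding RR_def by (auto intro!: exI[of _ "\<lambda>\<nu>. if \<nu> = \<mu> then 1 else 0"])
qed

text \<open>On the curve \<open>y ^ q = x ^ (q + 1) - y\<close>, which lowers the \<open>y\<close>-degree without raising the weight.\<close>
lemma monomial_curve_step: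
  assumes "P \<in> H" "q \<le> B"
  shows "monomial (A, B) P = monomial (A + q + 1, B - q) P - monomial (A, B - q + 1) P"
proof -
  obtain x y where P: "P = (x, y)" by (cases P)
  have "y ^ q = x ^ (q + 1) - y" using assms(1) P unfolding hermitian_affine_def by simp
  moreover have "y ^ B = y ^ (B - q) * y ^ q" using assms(2) by (simp flip: power_add)
  ultimately have "x ^ A * y ^ B = x ^ A * y ^ (B - q) * (x ^ (q + 1) - y)" by simp
  thus ?thesis unfolding P monomial_def by (simp add: right_diff_distrib power_add mult_ac)
qed

lemma weight_curve_step:
  assumes "q \<le> B"
  shows "weight (A + q + 1, B - q) = weight (A, B)" "weight (A, B - q + 1) < weight (A, B)"
proof -
  obtain C where "B = q + C" using assms le_Suc_ex by blast
  moreover have "2 * 2 \<le> q * q" using mult_le_mono[OF q_ge_2 q_ge_2] .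
  ultimately show "weight (A + q + 1, B - q) = weight (A, B)" "weight (A, B - q + 1) < weight (A, B)"
    unfolding weight_def by (simp_all add: algebra_simps)
qed

definition standard_exponent :: "nat \<times> nat \<Rightarrow> nat \<times> nat" where
  "standard_exponent \<mu> = (fst \<mu> + (q + 1) * (snd \<mu> div q), snd \<mu> mod q)"

lemma snd_standard_exponent: "snd (standard_exponent \<mu>) < q"
  unfolding standard_exponent_def using q_pos by simp

lemma weight_standard_exponent: "weight (standard_exponent \<mu>) = weight \<mu>"
proof -
  define d r where "d = snd \<mu> div q" and "r = snd \<mu> mod q"
  have "snd \<mu> = q * d + r" unfolding d_def r_def by simp
  thus ?thesis unfolding standard_exponent_def weight_def d_def[symmetric] r_def[symmetric]
    by (simp add: algebra_simps)
qed

lemma standard_exponent_curve_step: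
  assumes "q \<le> B"
  shows "standard_exponent (A + q + 1, B - q) = standard_exponent (A, B)"
proof -
  have "B div q = Suc ((B - q) div q)" using assms q_pos by (simp add: div_if)
  moreover have "(B - q) mod q = B mod q" using assms by (simp add: mod_if)
  ultimately show ?thesis unfolding standard_exponent_def by simp
qed

lemma monomial_reduce: "\<exists>g\<in>RR (weight \<mu> - 1). \<forall>P\<in>H. monomial \<mu> P = monomial (standard_exponent \<mu>) P + g P"
proof (induction "snd \<mu>" arbitrary: \<mu> rule: less_induct)
  case less
  obtain A B where \<mu>: "\<mu> = (A, B)" by fastforce
  show ?case
  proof (cases "B < q")
    case True
    hence "standard_exponent \<mu> = \<mu>" unfolding standard_exponent_def \<mu> by simp
    thus ?thesis using RR_zero by fastforce
  next
    case False
    hence "q \<le> B" by simp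
    have "snd (A + q + 1, B - q) < snd \<mu>" using q_pos \<open>q \<le> B\<close> \<mu> by simp
    from less[OF this] obtain g1 where g1: "g1 \<in> RR (weight \<mu> - 1)"
      "\<forall>P\<in>H. monomial (A + q + 1, B - q) P = monomial (standard_exponent \<mu>) P + g1 P"
      unfolding weight_curve_step(1)[OF \<open>q \<le> B\<close>] standard_exponent_curve_step[OF \<open>q \<le> B\<close>] \<mu>
      by blast
    let ?\<nu> = "(A, B - q + 1)"
    have "B - q + 1 < B" using \<open>q \<le> B\<close> q_ge_2 by simp
    then obtain g2 where g2: "g2 \<in> RR (weight ?\<nu> - 1)" "\<forall>P\<in>H. monomial ?\<nu> P = monomial (standard_exponent ?\<nu>) P + g2 P"
      using less[of ?\<nu>] \<mu> by auto
    have "weight ?\<nu> < weight \<mu>" using weight_curve_step(2)[OF \<open>q \<le> B\<close>] \<mu> by simp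
    hence le: "weight ?\<nu> \<le> weight \<mu> - 1" by linarith
    have "monomial (standard_exponent ?\<nu>) \<in> RR (weight \<mu> - 1)"
      using standard_monomial_in_RR[OF snd_standard_exponent] RR_mono[OF le] by (auto simp: weight_standard_exponent)
    moreover have "g2 \<in> RR (weight \<mu> - 1)"
      using g2(1) RR_mono[of "weight ?\<nu> - 1" "weight \<mu> - 1"] le by (meson diff_le_self le_trans subsetD)
    ultimately have "(\<lambda>P. monomial (standard_exponent ?\<nu>) P + g2 P) \<in> RR (weight \<mu> - 1)"
      by (rule RR_add)
    hence "monomial ?\<nu> \<in> RR (weight \<mu> - 1)" by (rule RR_cong) (use g2(2) in simp)
    show ?thesis
    proof
      show "(\<lambda>P. g1 P - monomial ?\<nu> P) \<in> RR (weight \<mu> - 1)"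
        by (rule RR_diff[OF g1(1) \<open>monomial ?\<nu> \<in> RR (weight \<mu> - 1)\<close>])
      show "\<forall>P\<in>H. monomial \<mu> P = monomial (standard_exponent \<mu>) P + (g1 P - monomial ?\<nu> P)"
        using monomial_curve_step[OF _ \<open>q \<le> B\<close>] g1(2) \<mu> by simp
    qed
  qed
qed

lemma monomial_in_RR: "monomial \<mu> \<in> RR (weight \<mu>)"
proof -
  obtain g where g: "g \<in> RR (weight \<mu> - 1)" "\<forall>P\<in>H. monomial \<mu> P = monomial (standard_exponent \<mu>) P + g P"
    using monomial_reduce by blast
  have "monomial (standard_exponent \<mu>) \<in> RR (weight \<mu>)"
    using standard_monomial_in_RR[OF snd_standard_exponent] by (simp add: weight_standard_exponent)
  moreover have "g \<in> RR (weight \<mu>)" using g(1) RR_mono[of "weight \<mu> - 1"] by (meson diff_le_self subsetD)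
  ultimately have "(\<lambda>P. monomial (standard_exponent \<mu>) P + g P) \<in> RR (weight \<mu>)"
    by (rule RR_add)
  thus ?thesis by (rule RR_cong) (use g(2) in simp)
qed

lemma RR_mult:
  assumes "f \<in> RR s" "g \<in> RR t"
  shows "(\<lambda>P. f P * g P) \<in> RR (s + t)"
proof -
  obtain c d where c: "\<forall>P\<in>H. f P = (\<Sum>\<mu>\<in>monomials s. c \<mu> * monomial \<mu> P)"
    and d: "\<forall>P\<in>H. g P = (\<Sum>\<nu>\<in>monomials t. d \<nu> * monomial \<nu> P)"
    using assms unfolding RR_def by auto
  have "(\<lambda>P. \<Sum>\<mu>\<in>monomials s. \<Sum>\<nu>\<in>monomials t. c \<mu> * d \<nu> * monomial (\<mu> + \<nu>) P) \<in> RR (s + t)"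
  proof (intro RR_sum RR_scale)
    fix \<mu> \<nu> assume "\<mu> \<in> monomials s" "\<nu> \<in> monomials t"
    hence "weight (\<mu> + \<nu>) \<le> s + t" unfolding monomials_def by (simp add: weight_add)
    hence "RR (weight (\<mu> + \<nu>)) \<subseteq> RR (s + t)" by (rule RR_mono)
    thus "monomial (\<mu> + \<nu>) \<in> RR (s + t)" using monomial_in_RR by blast
  qed
  thus ?thesis
    by (rule RR_cong) (simp add: c d sum_product flip: monomial_mult, simp add: algebra_simps)
qed

lemma RR_const: "(\<lambda>P. a) \<in> RR s"
proof -
  have "monomial 0 = (\<lambda>P. 1)" by (rule ext) (simp add: monomial_def)
  hence "(\<lambda>P. 1) \<in> RR 0" using monomial_in_RR[of 0] by (simp add: weight_def)
  hence "(\<lambda>P. a * 1) \<in> RR s" using RR_mono[of 0 s] RR_scale[of "\<lambda>P. 1" s a] by blast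
  thus ?thesis by simp
qed

lemma RR_fst_power: "(\<lambda>P. fst P ^ i) \<in> RR (q * i)"
proof -
  have "monomial (i, 0) = (\<lambda>P. fst P ^ i)" by (rule ext) (simp add: monomial_def)
  thus ?thesis using monomial_in_RR[of "(i, 0)"] by (simp add: weight_def)
qed

lemma RR_snd_power: "(\<lambda>P. snd P ^ b) \<in> RR ((q + 1) * b)"
proof -
  have "monomial (0, b) = (\<lambda>P. snd P ^ b)" by (rule ext) (simp add: monomial_def)
  thus ?thesis using monomial_in_RR[of "(0, b)"] by (simp add: weight_def)
qed

lemma RR_poly_fst: "(\<lambda>P. poly p (fst P)) \<in> RR (q * degree p)"
proof -
  have "(\<lambda>P. \<Sum>i\<le>degree p. coeff p i * fst P ^ i) \<in> RR (q * degree p)"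
  proof (intro RR_sum RR_scale)
    fix i assume "i \<in> {..degree p}"
    hence "RR (q * i) \<subseteq> RR (q * degree p)" by (intro RR_mono) simp
    thus "(\<lambda>P. fst P ^ i) \<in> RR (q * degree p)" using RR_fst_power by blast
  qed
  thus ?thesis by (simp add: poly_altdef)
qed

text \<open>The Weierstrass semigroup \<open>\<langle>q, q + 1\<rangle>\<close> of \<open>P\<^sub>\<infinity>\<close>: \<open>n = q * a + (q + 1) * b\<close> with
  \<open>b < q\<close> forces \<open>b = n mod q\<close>.\<close>
definition pole_numbers :: "nat set" where
  "pole_numbers = {n. (q + 1) * (n mod q) \<le> n}"

definition exponent_of_pole_number :: "nat \<Rightarrow> nat \<times> nat" where
  "exponent_of_pole_number n = ((n - (q + 1) * (n mod q)) div q, n mod q)"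

definition genus :: nat where "genus = q * (q - 1) div 2"

definition splits :: "nat \<Rightarrow> nat set" where
  "splits n = {\<sigma>. \<sigma> \<le> n \<and> \<sigma> \<in> pole_numbers \<and> n - \<sigma> \<in> pole_numbers}"

lemma two_genus: "2 * genus = q * (q - 1)"
proof -
  have "even (q * (q - 1))" by (cases "even q") auto
  thus ?thesis unfolding genus_def by simp
qed

lemma weight_exponent_of_pole_number:
  assumes "n \<in> pole_numbers"
  shows "weight (exponent_of_pole_number n) = n"
proof -
  define d r where "d = n div q" and "r = n mod q"
  have n: "n = q * d + r" unfolding d_def r_def by simp
  have "(q + 1) * (n mod q) \<le> n" using assms unfolding pole_numbers_def by simp
  hence "(q + 1) * r \<le> q * d + r" unfolding r_def[symmetric] using n by simp
  hence "q * r \<le> q * d" by (simp add: algebra_simps)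
  hence "r \<le> d" using q_pos by simp
  hence "n - (q + 1) * r = q * (d - r)" using n by (simp add: algebra_simps diff_mult_distrib2)
  hence "q * ((n - (q + 1) * r) div q) = n - (q + 1) * r" using q_pos by simp
  thus ?thesis using assms unfolding weight_def exponent_of_pole_number_def pole_numbers_def r_def by simp
qed

lemma weight_in_pole_numbers:
  assumes "snd \<mu> < q"
  shows "weight \<mu> \<in> pole_numbers" and "exponent_of_pole_number (weight \<mu>) = \<mu>"
proof -
  obtain a b where \<mu>: "\<mu> = (a, b)" by fastforce
  have "q * a + (q + 1) * b = b + q * (a + b)" by (simp add: algebra_simps)
  hence m: "weight \<mu> mod q = b" using assms \<mu> by (simp add: weight_def)
  show "weight \<mu> \<in> pole_numbers" unfolding pole_numbers_def using m by (simp add: weight_def \<mu>)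
  show "exponent_of_pole_number (weight \<mu>) = \<mu>"
    unfolding exponent_of_pole_number_def using m q_pos by (simp add: weight_def \<mu>)
qed

lemma weight_inj: "snd \<mu> < q \<Longrightarrow> snd \<nu> < q \<Longrightarrow> weight \<mu> = weight \<nu> \<Longrightarrow> \<mu> = \<nu>"
  by (metis weight_in_pole_numbers(2))

lemma card_pairs_less: "card {(k, r). k < r \<and> r < (n::nat)} = n * (n - 1) div 2"
proof (induction n)
  case (Suc n)
  have e: "{(k, r). k < r \<and> r < Suc n} = {(k, r). k < r \<and> r < n} \<union> {..<n} \<times> {n}" by auto
  have f: "finite {(k, r). k < r \<and> r < (n::nat)}"
    by (rule finite_subset[of _ "{..<n} \<times> {..<n}"]) auto
  have "card {(k, r). k < r \<and> r < Suc n} = n * (n - 1) div 2 + n"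
    unfolding e by (subst card_Un_disjoint) (use f Suc in auto)
  also have "\<dots> = Suc n * (Suc n - 1) div 2"
  proof -
    have "Suc n * (Suc n - 1) = n * (n - 1) + 2 * n" by (cases n) (auto simp: algebra_simps)
    thus ?thesis by simp
  qed
  finally show ?case .
qed simp

text \<open>A gap \<open>\<sigma>\<close> has \<open>\<sigma> div q < \<sigma> mod q\<close>, so there are at most \<open>genus\<close> of them.\<close>
lemma card_gaps_le: "card {\<sigma>. \<sigma> \<le> n \<and> \<sigma> \<notin> pole_numbers} \<le> genus"
proof -
  let ?G = "{\<sigma>. \<sigma> \<le> n \<and> \<sigma> \<notin> pole_numbers}"
  have "inj_on (\<lambda>\<sigma>. (\<sigma> div q, \<sigma> mod q)) ?G"
    by (intro inj_onI) (metis div_mult_mod_eq prod.inject)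
  moreover have "(\<lambda>\<sigma>. (\<sigma> div q, \<sigma> mod q)) ` ?G \<subseteq> {(k, r). k < r \<and> r < q}"
  proof clarify
    fix \<sigma> assume "\<sigma> \<notin> pole_numbers"
    define d r where "d = \<sigma> div q" and "r = \<sigma> mod q"
    have "\<sigma> = q * d + r" unfolding d_def r_def by simp
    moreover have "\<sigma> < (q + 1) * (\<sigma> mod q)" using \<open>\<sigma> \<notin> pole_numbers\<close> unfolding pole_numbers_def by simp
    ultimately have "q * d < q * r" unfolding r_def[symmetric] by (simp add: algebra_simps)
    hence "d < r" by simp
    thus "\<sigma> div q < \<sigma> mod q \<and> \<sigma> mod q < q" unfolding d_def r_def using q_pos by simp
  qed
  moreover have "finite {(k, r). k < r \<and> r < q}"
    by (rule finite_subset[of _ "{..<q} \<times> {..<q}"]) auto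
  ultimately have "card ?G \<le> card {(k, r). k < r \<and> r < q}"
    using card_inj_on_le by blast
  thus ?thesis using card_pairs_less unfolding genus_def by simp
qed

lemma card_splits: "n + 1 \<le> card (splits n) + 2 * genus"
proof -
  let ?G1 = "{\<sigma>. \<sigma> \<le> n \<and> \<sigma> \<notin> pole_numbers}" and ?G2 = "{\<sigma>. \<sigma> \<le> n \<and> n - \<sigma> \<notin> pole_numbers}"
  have "?G2 = (\<lambda>\<sigma>. n - \<sigma>) ` ?G1"
  proof (intro set_eqI iffI)
    fix x assume "x \<in> ?G2" thus "x \<in> (\<lambda>\<sigma>. n - \<sigma>) ` ?G1" by (intro image_eqI[of _ _ "n - x"]) auto
  qed auto
  hence "card ?G2 \<le> genus" using card_gaps_le[of n] card_image_le[of ?G1 "\<lambda>\<sigma>. n - \<sigma>"] by simp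
  have "{..n} \<subseteq> splits n \<union> ?G1 \<union> ?G2" unfolding splits_def by auto
  hence "card {..n} \<le> card (splits n \<union> ?G1 \<union> ?G2)" by (intro card_mono) (auto simp: splits_def)
  also have "\<dots> \<le> card (splits n) + card ?G1 + card ?G2"
    by (metis (no_types, lifting) add_le_mono1 card_Un_le order_trans)
  finally show ?thesis using card_gaps_le[of n] \<open>card ?G2 \<le> genus\<close> by simp
qed

text \<open>The weight of \<open>x ^ (q ^ 2 - 1) * y ^ (q - 1)\<close>; every standard monomial of smaller weight
  sums to zero over the affine points.\<close>
definition top_weight :: nat where "top_weight = weight (q ^ 2 - 1, q - 1)"

lemma top_weight_eq: "top_weight + 1 = q ^ 3 + 2 * genus"
  using q_pos unfolding top_weight_def weight_def two_genus
  by (cases q) (simp_all add: algebra_simps power2_eq_square power3_eq_cube)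


lemma sum_mult_RR_eq_0:
  assumes "\<forall>\<mu>\<in>monomials s. (\<Sum>P\<in>H. w P * monomial \<mu> P) = 0" "f \<in> RR s"
  shows "(\<Sum>P\<in>H. w P * f P) = 0"
proof -
  obtain c where c: "\<forall>P\<in>H. f P = (\<Sum>\<mu>\<in>monomials s. c \<mu> * monomial \<mu> P)"
    using assms(2) unfolding RR_def by auto
  have "(\<Sum>P\<in>H. w P * f P) = (\<Sum>P\<in>H. \<Sum>\<mu>\<in>monomials s. c \<mu> * (w P * monomial \<mu> P))"
    using c by (simp add: sum_distrib_left mult.left_commute)
  also have "\<dots> = (\<Sum>\<mu>\<in>monomials s. c \<mu> * (\<Sum>P\<in>H. w P * monomial \<mu> P))"
    by (subst sum.swap) (simp add: sum_distrib_left)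
  finally show ?thesis using assms(1) by simp
qed

lemma sum_standard_monomial_eq_0:
  assumes "snd \<mu> < q" "weight \<mu> < top_weight"
  shows "(\<Sum>P\<in>H. monomial \<mu> P) = 0"
proof -
  obtain a b where \<mu>: "\<mu> = (a, b)" by fastforce
  have "(\<Sum>x::'a\<in>UNIV. x ^ a) = 0" if "b = q - 1"
  proof -
    have "weight (a, q - 1) < weight (q ^ 2 - 1, q - 1)" using assms \<mu> that unfolding top_weight_def by simp
    hence "q * a < q * (q ^ 2 - 1)" by (simp only: weight_def fst_conv snd_conv add_less_cancel_right)
    thus ?thesis using sum_UNIV_power_eq_0[of a, where 'a='a] card_field by simp
  qed
  thus ?thesis using sum_hermitian_affine_monomial[of b a] assms(1) \<mu> by (simp add: monomial_def)
qed

lemma sum_RR_eq_0: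
  assumes "f \<in> RR (top_weight - 1)"
  shows "(\<Sum>P\<in>H. f P) = 0"
proof -
  have "1 < q ^ 3" using q_ge_2 by (intro one_less_power) auto
  hence "0 < top_weight" using top_weight_eq by linarith
  hence "\<forall>\<mu>\<in>monomials (top_weight - 1). (\<Sum>P\<in>H. 1 * monomial \<mu> P) = 0"
    unfolding monomials_def using sum_standard_monomial_eq_0 by auto
  from sum_mult_RR_eq_0[OF this assms] show ?thesis by simp
qed

section \<open>Duality and interpolation on the affine points\<close>

lemma sum_mult_poly_eq_0:
  assumes orth: "\<forall>\<mu>. snd \<mu> < q \<longrightarrow> (\<Sum>P\<in>H. w P * monomial \<mu> P) = 0" and "degree v < q"
  shows "(\<Sum>P\<in>H. w P * (poly u (fst P) * poly v (snd P))) = 0"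
proof -
  have "(\<Sum>P\<in>H. w P * (poly u (fst P) * poly v (snd P)))
      = (\<Sum>P\<in>H. \<Sum>j\<le>degree v. \<Sum>i\<le>degree u. coeff u i * coeff v j * (w P * monomial (i, j) P))"
    by (simp add: poly_altdef sum_product sum_distrib_left monomial_def algebra_simps)
  also have "\<dots> = (\<Sum>j\<le>degree v. \<Sum>i\<le>degree u. coeff u i * coeff v j * (\<Sum>P\<in>H. w P * monomial (i, j) P))"
    by (simp add: sum.swap[of _ H] sum_distrib_left)
  also have "\<dots> = 0" using orth assms(2) by (intro sum.neutral ballI) auto
  finally show ?thesis .
qed

text \<open>Test against \<open>u(x) v(y)\<close>, where \<open>u\<close> is the indicator of \<open>c\<close> and \<open>v\<close> vanishes on the
  other \<open>q - 1\<close> points of the fibre of the curve over \<open>c\<close>.\<close>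
lemma orthogonal_standard_monomials_imp_zero:
  assumes orth: "\<forall>\<mu>. snd \<mu> < q \<longrightarrow> (\<Sum>P\<in>H. w P * monomial \<mu> P) = 0" and "(c, d) \<in> H"
  shows "w (c, d) = 0"
proof -
  let ?u = "1 - [:- c, 1:] ^ (CARD('a) - 1)"
  have u: "poly ?u x = (if x = c then 1 else 0)" for x
    using power_CARD_minus_1[of "x - c"] two_le_CARD_field[where 'a='a] by auto
  let ?F = "trace_fibre (c ^ (q + 1)) - {d}"
  let ?v = "\<Prod>d'\<in>?F. [:- d', 1:]"
  have d: "d \<in> trace_fibre (c ^ (q + 1))" using assms(2) unfolding hermitian_affine_def trace_fibre_def by simp
  hence "card ?F = q - 1" using card_trace_fibre[OF norm_in_Fq] by simp
  hence "degree ?v < q" using degree_prod_sum_le[of ?F "\<lambda>d'. [:- d', 1:]"] q_pos by (simp add: o_def)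
  have v: "poly ?v y = (\<Prod>d'\<in>?F. y - d')" for y by (simp add: poly_prod)
  have "(\<Sum>P\<in>H. w P * (poly ?u (fst P) * poly ?v (snd P)))
      = (\<Sum>x\<in>UNIV. \<Sum>y\<in>trace_fibre (x ^ (q + 1)). w (x, y) * (poly ?u x * poly ?v y))"
    by (simp only: sum_hermitian_affine fst_conv snd_conv)
  also have "\<dots> = (\<Sum>x\<in>UNIV. if x = c then (\<Sum>y\<in>trace_fibre (x ^ (q + 1)). w (x, y) * poly ?v y) else 0)"
    by (intro sum.cong refl) (simp only: u, simp)
  also have "\<dots> = (\<Sum>y\<in>trace_fibre (c ^ (q + 1)). w (c, y) * poly ?v y)" by simp
  also have "\<dots> = w (c, d) * poly ?v d + (\<Sum>y\<in>?F. w (c, y) * poly ?v y)"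
    using d by (simp add: sum.remove)
  also have "(\<Sum>y\<in>?F. w (c, y) * poly ?v y) = 0"
    by (intro sum.neutral ballI) (simp only: v, simp add: prod_zero_iff)
  finally have "w (c, d) * poly ?v d = 0"
    using sum_mult_poly_eq_0[OF orth \<open>degree ?v < q\<close>, of ?u] by simp
  moreover have "poly ?v d \<noteq> 0" by (simp only: v) (simp add: prod_zero_iff)
  ultimately show ?thesis by simp
qed

text \<open>Pair \<open>w * x^\<sigma>\<close> with \<open>x^(n - \<tau>)\<close> for \<open>\<sigma>, \<tau> \<in> splits n\<close> (writing \<open>x^\<sigma>\<close> for the standard
  monomial of weight \<open>\<sigma>\<close>): the product has weight \<open>n + \<sigma> - \<tau>\<close>, so the pairing over the
  support of \<open>w\<close> is triangular with nonzero diagonal.\<close>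
lemma card_splits_le_support:
  assumes below: "\<And>\<nu>. weight \<nu> < n \<Longrightarrow> (\<Sum>P\<in>H. w P * monomial \<nu> P) = 0"
    and at: "\<And>\<nu>. weight \<nu> = n \<Longrightarrow> (\<Sum>P\<in>H. w P * monomial \<nu> P) \<noteq> 0"
  shows "card (splits n) \<le> card {P\<in>H. w P \<noteq> 0}"
proof -
  let ?Z = "{P\<in>H. w P \<noteq> 0}" and ?e = exponent_of_pole_number
  let ?a = "\<lambda>\<sigma> P. w P * monomial (?e \<sigma>) P" and ?b = "\<lambda>\<tau> P. monomial (?e (n - \<tau>)) P"
  have pairing: "(\<Sum>P\<in>?Z. ?a \<sigma> P * ?b \<tau> P) = (\<Sum>P\<in>H. w P * monomial (?e \<sigma> + ?e (n - \<tau>)) P)"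
    for \<sigma> \<tau>
  proof -
    have "(\<Sum>P\<in>?Z. ?a \<sigma> P * ?b \<tau> P) = (\<Sum>P\<in>H. ?a \<sigma> P * ?b \<tau> P)"
      by (rule sum.mono_neutral_left) auto
    thus ?thesis by (simp add: mult.assoc monomial_mult)
  qed
  have weight: "weight (?e \<sigma> + ?e (n - \<tau>)) = \<sigma> + (n - \<tau>)" if "\<sigma> \<in> splits n" "\<tau> \<in> splits n" for \<sigma> \<tau>
    using that unfolding splits_def by (simp add: weight_add weight_exponent_of_pole_number)
  show ?thesis
  proof (rule card_le_if_triangular_pairing)
    show "\<forall>i\<in>splits n. \<forall>j\<in>splits n. i < j \<longrightarrow> (\<Sum>P\<in>?Z. ?a i P * ?b j P) = 0"
    proof (intro ballI impI)
      fix i j assume ij: "i \<in> splits n" "j \<in> splits n" "i < j"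
      have "j \<le> n" using ij(2) unfolding splits_def by simp
      hence "i + (n - j) < n" using ij(3) by linarith
      thus "(\<Sum>P\<in>?Z. ?a i P * ?b j P) = 0" using below weight[OF ij(1,2)] unfolding pairing by metis
    qed
    show "\<forall>i\<in>splits n. (\<Sum>P\<in>?Z. ?a i P * ?b i P) \<noteq> 0"
    proof
      fix i assume i: "i \<in> splits n"
      hence "i \<le> n" unfolding splits_def by simp
      hence "i + (n - i) = n" by simp
      thus "(\<Sum>P\<in>?Z. ?a i P * ?b i P) \<noteq> 0" using at weight[OF i i] unfolding pairing by metis
    qed
  qed (auto simp: splits_def)
qed

lemma least_nonorthogonal_monomial:
  assumes "\<exists>P\<in>H. w P \<noteq> 0"
  obtains \<mu>0 where "snd \<mu>0 < q" "(\<Sum>P\<in>H. w P * monomial \<mu>0 P) \<noteq> 0"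
    "\<And>\<mu>. snd \<mu> < q \<Longrightarrow> weight \<mu> < weight \<mu>0 \<Longrightarrow> (\<Sum>P\<in>H. w P * monomial \<mu> P) = 0"
proof -
  let ?pairing = "\<lambda>\<mu>. \<Sum>P\<in>H. w P * monomial \<mu> P"
  obtain c d where "(c, d) \<in> H" "w (c, d) \<noteq> 0" using assms by auto
  hence "\<not> (\<forall>\<mu>. snd \<mu> < q \<longrightarrow> ?pairing \<mu> = 0)"
    using orthogonal_standard_monomials_imp_zero[of w c d] by blast
  then obtain \<mu>1 where "snd \<mu>1 < q \<and> ?pairing \<mu>1 \<noteq> 0" by blast
  then obtain \<mu>0 where "snd \<mu>0 < q" "?pairing \<mu>0 \<noteq> 0"
    and least: "\<And>\<mu>. snd \<mu> < q \<Longrightarrow> ?pairing \<mu> \<noteq> 0 \<Longrightarrow> weight \<mu>0 \<le> weight \<mu>"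
    using ex_has_least_nat[where P = "\<lambda>\<mu>. snd \<mu> < q \<and> ?pairing \<mu> \<noteq> 0" and m = weight] by blast
  moreover have "?pairing \<mu> = 0" if "snd \<mu> < q" "weight \<mu> < weight \<mu>0" for \<mu>
    using least[OF that(1)] that(2) by (meson leD)
  ultimately show ?thesis using that by blast
qed

text \<open>The bound comes
  from the least weight \<open>n > s\<close> at which \<open>w\<close> is not orthogonal to a monomial.\<close>
lemma card_support_if_orthogonal_RR:
  assumes orth: "\<forall>\<mu>\<in>monomials s. (\<Sum>P\<in>H. w P * monomial \<mu> P) = 0" and "\<exists>P\<in>H. w P \<noteq> 0"
  shows "s + 2 \<le> card {P\<in>H. w P \<noteq> 0} + 2 * genus"
proof -
  let ?pairing = "\<lambda>\<mu>. \<Sum>P\<in>H. w P * monomial \<mu> P"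
  obtain \<mu>0 where \<mu>0: "snd \<mu>0 < q" "?pairing \<mu>0 \<noteq> 0"
    and least: "\<And>\<mu>. snd \<mu> < q \<Longrightarrow> weight \<mu> < weight \<mu>0 \<Longrightarrow> ?pairing \<mu> = 0"
    using least_nonorthogonal_monomial[OF assms(2)] by blast
  define n where "n = weight \<mu>0"
  have "s < n"
  proof (rule ccontr)
    assume "\<not> s < n"
    hence "\<mu>0 \<in> monomials s" using \<mu>0(1) unfolding monomials_def n_def by simp
    thus False using orth \<mu>0(2) by simp
  qed
  have orth_below: "(\<Sum>P\<in>H. w P * g P) = 0" if "g \<in> RR (n - 1)" for g
  proof (rule sum_mult_RR_eq_0[OF _ that], intro ballI)
    fix \<mu> assume "\<mu> \<in> monomials (n - 1)"
    hence "snd \<mu> < q" "weight \<mu> < weight \<mu>0" using \<open>s < n\<close> unfolding monomials_def n_def by auto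
    thus "?pairing \<mu> = 0" by (rule least)
  qed
  have below: "?pairing \<nu> = 0" if "weight \<nu> < n" for \<nu>
  proof -
    from that have "RR (weight \<nu>) \<subseteq> RR (n - 1)" by (intro RR_mono) simp
    thus ?thesis using orth_below monomial_in_RR by blast
  qed
  have at: "?pairing \<nu> \<noteq> 0" if weight_\<nu>: "weight \<nu> = n" for \<nu>
  proof -
    obtain g where g: "g \<in> RR (n - 1)" "\<forall>P\<in>H. monomial \<nu> P = monomial (standard_exponent \<nu>) P + g P"
      using monomial_reduce[of \<nu>, unfolded weight_\<nu>] by blast
    have "standard_exponent \<nu> = \<mu>0"
      using weight_inj[OF snd_standard_exponent \<mu>0(1)] weight_\<nu>
      by (simp add: weight_standard_exponent n_def)
    hence "?pairing \<nu> = ?pairing \<mu>0 + (\<Sum>P\<in>H. w P * g P)"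
      using g(2) by (simp add: distrib_left sum.distrib)
    thus ?thesis using orth_below[OF g(1)] \<mu>0(2) by simp
  qed
  have "n + 1 \<le> card {P\<in>H. w P \<noteq> 0} + 2 * genus"
    using card_splits[of n] card_splits_le_support[of n w, OF below at] by linarith
  thus ?thesis using \<open>s < n\<close> by linarith
qed

text \<open>Otherwise \<open>f\<close> is itself a nonzero vector orthogonal to \<open>RR (top_weight - 1 - s)\<close>, and the
  support bound above contradicts the number of zeros.\<close>
lemma RR_eq_0_if_card_zeros_gt:
  assumes "f \<in> RR s" "Zs \<subseteq> H" "\<forall>P\<in>Zs. f P = 0" "s < card Zs"
  shows "\<forall>P\<in>H. f P = 0"
proof (rule ccontr)
  assume "\<not> (\<forall>P\<in>H. f P = 0)"
  have "card Zs \<le> q ^ 3" using card_mono[OF _ assms(2)] card_hermitian_affine by simp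
  moreover have "1 \<le> genus" using two_genus q_ge_2 by (cases q) auto
  ultimately have "s + 1 \<le> top_weight" using assms(4) top_weight_eq by linarith
  have "\<forall>\<mu>\<in>monomials (top_weight - 1 - s). (\<Sum>P\<in>H. f P * monomial \<mu> P) = 0"
  proof
    fix \<mu> assume "\<mu> \<in> monomials (top_weight - 1 - s)"
    hence "monomial \<mu> \<in> RR (top_weight - 1 - s)"
      using monomial_in_RR RR_mono unfolding monomials_def by blast
    hence "(\<lambda>P. f P * monomial \<mu> P) \<in> RR (s + (top_weight - 1 - s))" by (rule RR_mult[OF assms(1)])
    thus "(\<Sum>P\<in>H. f P * monomial \<mu> P) = 0"
      using sum_RR_eq_0 \<open>s + 1 \<le> top_weight\<close> by simp
  qed
  from card_support_if_orthogonal_RR[OF this] \<open>\<not> (\<forall>P\<in>H. f P = 0)\<close>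
  have "top_weight - 1 - s + 2 \<le> card {P\<in>H. f P \<noteq> 0} + 2 * genus" by blast
  hence "q ^ 3 \<le> card {P\<in>H. f P \<noteq> 0} + s" using top_weight_eq \<open>s + 1 \<le> top_weight\<close> by linarith
  moreover have "card {P\<in>H. f P \<noteq> 0} + card Zs \<le> q ^ 3"
  proof -
    have "{P\<in>H. f P \<noteq> 0} \<inter> Zs = {}" using assms(3) by auto
    hence "card {P\<in>H. f P \<noteq> 0} + card Zs = card ({P\<in>H. f P \<noteq> 0} \<union> Zs)"
      by (simp add: card_Un_disjoint)
    also have "\<dots> \<le> card H" using assms(2) by (intro card_mono) auto
    finally show ?thesis using card_hermitian_affine by simp
  qed
  ultimately show False using assms(4) by linarith
qed

lemma RR_interpolates:
  assumes "S \<subseteq> H" "card S + 2 * genus \<le> s + 1"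
  shows "\<exists>c. \<forall>P\<in>S. t P = (\<Sum>\<mu>\<in>monomials s. c \<mu> * monomial \<mu> P)"
proof -
  have "finite S" by simp
  have "\<forall>w. (\<forall>\<mu>\<in>monomials s. (\<Sum>P\<in>S. w P * monomial \<mu> P) = 0) \<longrightarrow> (\<forall>P\<in>S. w P = 0)"
  proof (intro allI impI)
    fix w assume orth: "\<forall>\<mu>\<in>monomials s. (\<Sum>P\<in>S. w P * monomial \<mu> P) = 0"
    define w' where "w' P = (if P \<in> S then w P else 0)" for P
    have "(\<Sum>P\<in>H. w' P * monomial \<mu> P) = (\<Sum>P\<in>S. w P * monomial \<mu> P)" for \<mu>
    proof -
      have "(\<Sum>P\<in>H. w' P * monomial \<mu> P) = (\<Sum>P\<in>S. w' P * monomial \<mu> P)"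
        using assms(1) by (intro sum.mono_neutral_right) (auto simp: w'_def)
      also have "\<dots> = (\<Sum>P\<in>S. w P * monomial \<mu> P)" by (rule sum.cong) (auto simp: w'_def)
      finally show ?thesis .
    qed
    hence orth': "\<forall>\<mu>\<in>monomials s. (\<Sum>P\<in>H. w' P * monomial \<mu> P) = 0" using orth by simp
    show "\<forall>P\<in>S. w P = 0"
    proof (rule ccontr)
      assume "\<not> (\<forall>P\<in>S. w P = 0)"
      then obtain P where "P \<in> S" "w P \<noteq> 0" by blast
      hence "\<exists>P\<in>H. w' P \<noteq> 0" using assms(1) unfolding w'_def by auto
      hence "s + 2 \<le> card {P\<in>H. w' P \<noteq> 0} + 2 * genus"
        by (rule card_support_if_orthogonal_RR[OF orth'])
      moreover have "card {P\<in>H. w' P \<noteq> 0} \<le> card S"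
        using \<open>finite S\<close> unfolding w'_def by (intro card_mono) auto
      ultimately show False using assms(2) by linarith
    qed
  qed
  thus ?thesis by (rule interpolation_if_trivial_annihilator[OF \<open>finite S\<close> finite_monomials])
qed

section \<open>Choice of the evaluation points\<close>

lemma mem_image_if_fibre_covered:
  assumes "inj_on f A" "card A = q" "\<forall>z\<in>A. (c, f z) \<in> H" "(c, y) \<in> H"
  shows "y \<in> f ` A"
proof -
  have "f ` A \<subseteq> trace_fibre (c ^ (q + 1))"
    using assms(3) unfolding hermitian_affine_def trace_fibre_def by auto
  moreover have "card (f ` A) = card (trace_fibre (c ^ (q + 1)))"
    using card_image[OF assms(1)] assms(2) card_trace_fibre[OF norm_in_Fq] by simp
  ultimately have "f ` A = trace_fibre (c ^ (q + 1))" by (intro card_subset_eq) auto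
  thus ?thesis using assms(4) unfolding hermitian_affine_def trace_fibre_def by auto
qed

text \<open>The \<open>q\<close> points \<open>P i z\<close> exhaust the affine points above \<open>\<alpha> i\<close>, so any other point has
  \<open>x \<noteq> \<alpha> i\<close>.\<close>
lemma exists_evaluation_points:
  assumes P: "\<forall>i\<in>{1..m}. \<forall>z\<in>{1..q}. P i z \<in> H \<and> fst (P i z) = \<alpha> i"
    and inj_P: "inj_on (\<lambda>(i, z). P i z) ({1..m} \<times> {1..q})"
    and N: "N \<le> card (H - {(0, 0)} - (\<lambda>(i, z). P i z) ` ({1..m} \<times> {1..q}))"
  obtains R where "inj_on R {1..N}" "R ` {1..N} \<subseteq> H" "\<forall>n\<in>{1..N}. \<forall>i\<in>{1..m}. fst (R n) \<noteq> \<alpha> i"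
proof -
  let ?Pimg = "(\<lambda>(i, z). P i z) ` ({1..m} \<times> {1..q})"
  obtain A where A: "A \<subseteq> H - {(0, 0)} - ?Pimg" "card A = N"
    using obtain_subset_with_card_n[OF N] by blast
  obtain R where R: "bij_betw R {1..N} A"
    using ex_bij_betw_nat_finite_1[of A] A(2) by auto
  have "fst Q \<noteq> \<alpha> i" if "Q \<in> A" "i \<in> {1..m}" for Q i
  proof
    assume x: "fst Q = \<alpha> i"
    have inj: "inj_on (\<lambda>z. snd (P i z)) {1..q}"
      using inj_on_snd_if_fst_eq[OF inj_P _ that(2)] P that(2) by blast
    have cover: "\<forall>z\<in>{1..q}. (\<alpha> i, snd (P i z)) \<in> H" using P that(2) by (metis prod.collapse)
    have "Q \<in> H" using that(1) A(1) by blast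
    hence "(\<alpha> i, snd Q) \<in> H" using x by (metis prod.collapse)
    hence "snd Q \<in> (\<lambda>z. snd (P i z)) ` {1..q}"
      using mem_image_if_fibre_covered[OF inj _ cover] by simp
    then obtain z where "z \<in> {1..q}" "snd Q = snd (P i z)" by blast
    hence "Q = P i z" using P that(2) x by (simp add: prod_eq_iff)
    thus False using that A(1) \<open>z \<in> {1..q}\<close> by blast
  qed
  moreover have "R ` {1..N} = A" using R by (rule bij_betw_imp_surj_on)
  ultimately show ?thesis using that[OF bij_betw_imp_inj_on[OF R]] A(1) by blast
qed

lemma xstpir_parameters:
  assumes "q * m = L + genus" "N = L + X + T + 3 * q ^ 2 - q - 2"
  shows "q * m + (X + 2 * genus - 1) + (T + 2 * genus - 1) + q < N"
    and "N \<le> L + X + T + (7 * q ^ 2 - 3 * q - 6) div 2 + 1"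
    and "N = L + (X + T + 3 * q ^ 2 - q - 2)"
proof -
  have g: "2 * genus + q = q * q" using two_genus q_pos by (cases q) auto
  have q2: "2 * q \<le> q * q" using mult_le_mono1[OF q_ge_2] by simp
  have "7 * q ^ 2 - 3 * q - 6 = 2 * (7 * genus + 2 * q - 3)" using g q2 q_ge_2 by (simp add: power2_eq_square)
  hence "(7 * q ^ 2 - 3 * q - 6) div 2 = 7 * genus + 2 * q - 3" by simp
  thus "q * m + (X + 2 * genus - 1) + (T + 2 * genus - 1) + q < N"
    "N \<le> L + X + T + (7 * q ^ 2 - 3 * q - 6) div 2 + 1"
    "N = L + (X + T + 3 * q ^ 2 - q - 2)"
    using assms g q2 q_ge_2 unfolding power2_eq_square by linarith+
qed

end

section \<open>The retrieval scheme\<close>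

text \<open>The data of the construction: evaluation points \<open>R n\<close> of the \<open>N\<close> servers, and the \<open>q\<close>
  points \<open>P i z\<close> above each \<open>\<alpha> i\<close>, which carry the \<open>L \<le> q * m\<close> symbols of a file.\<close>
locale xstpir_construction = hermitian_curve q field_type
  for q and field_type :: "'a::{finite,field} itself" +
  fixes L X T m N :: nat and \<alpha> :: "nat \<Rightarrow> 'a" and P :: "nat \<Rightarrow> nat \<Rightarrow> 'a \<times> 'a" and R :: "nat \<Rightarrow> 'a \<times> 'a"
  assumes X_pos: "X > 0" and T_pos: "T > 0"
    and L_le: "L \<le> q * m"
    and inj_\<alpha>: "inj_on \<alpha> {1..m}"
    and P_on_curve: "\<forall>i\<in>{1..m}. \<forall>z\<in>{1..q}. P i z \<in> H \<and> fst (P i z) = \<alpha> i"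
    and inj_P: "inj_on (\<lambda>(i, z). P i z) ({1..m} \<times> {1..q})"
    and inj_R: "inj_on R {1..N}" and R_on_curve: "R ` {1..N} \<subseteq> H"
    and R_avoids_\<alpha>: "\<forall>n\<in>{1..N}. \<forall>i\<in>{1..m}. fst (R n) \<noteq> \<alpha> i"
    and N_gt: "q * m + (X + 2 * genus - 1) + (T + 2 * genus - 1) + q < N"
begin

text \<open>Storage masks lie in \<open>RR deg_X\<close> and query masks in \<open>RR deg_T\<close>; all interference in an
  answer lies in \<open>RR deg_answer\<close>.\<close>
definition deg_X :: nat where "deg_X = X + 2 * genus - 1"
definition deg_T :: nat where "deg_T = T + 2 * genus - 1"
definition deg_answer :: nat where "deg_answer = deg_X + deg_T + q"

text \<open>Symbol \<open>l < L\<close> of a file sits at \<open>x = \<alpha> (block l)\<close> with the factor \<open>y ^ y_exponent l\<close>.\<close>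
definition block :: "nat \<Rightarrow> nat" where "block l = l div q + 1"
definition y_exponent :: "nat \<Rightarrow> nat" where "y_exponent l = l mod q"

definition node_poly :: "'a poly" where "node_poly = (\<Prod>i\<in>{1..m}. [:- \<alpha> i, 1:])"
definition cofactor :: "nat \<Rightarrow> 'a poly" where "cofactor i = (\<Prod>i'\<in>{1..m} - {i}. [:- \<alpha> i', 1:])"

lemma block_range: "l < L \<Longrightarrow> block l \<in> {1..m}"
proof -
  assume "l < L"
  hence "l < q * m" using L_le by simp
  hence "l div q < m" using q_pos by (simp add: less_mult_imp_div_less mult.commute)
  thus "block l \<in> {1..m}" unfolding block_def by simp
qed

lemma y_exponent_less: "y_exponent l < q"
  unfolding y_exponent_def using q_pos by simp

lemma y_exponent_le: "y_exponent l \<le> q - 1"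
  using y_exponent_less[of l] by linarith

lemma poly_node_poly: "i \<in> {1..m} \<Longrightarrow> poly node_poly x = (x - \<alpha> i) * poly (cofactor i) x"
  unfolding node_poly_def cofactor_def by (simp add: poly_prod prod.remove left_diff_distrib)

lemma poly_cofactor_eq_0: "i \<in> {1..m} \<Longrightarrow> i' \<in> {1..m} \<Longrightarrow> i' \<noteq> i \<Longrightarrow> poly (cofactor i') (\<alpha> i) = 0"
  unfolding cofactor_def poly_prod by (rule prod_zero) auto

lemma poly_cofactor_ne_0: "i \<in> {1..m} \<Longrightarrow> poly (cofactor i) (\<alpha> i) \<noteq> 0"
  unfolding cofactor_def poly_prod using inj_onD[OF inj_\<alpha>] by (auto simp: prod_zero_iff)

lemma degree_node_poly: "degree node_poly \<le> m"
  unfolding node_poly_def using degree_prod_sum_le[of "{1..m}" "\<lambda>i. [:- \<alpha> i, 1:]"] by (simp add: o_def)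

lemma degree_cofactor: "i \<in> {1..m} \<Longrightarrow> degree (cofactor i) \<le> m - 1"
  unfolding cofactor_def using degree_prod_sum_le[of "{1..m} - {i}" "\<lambda>i. [:- \<alpha> i, 1:]"] by (simp add: o_def)

lemma R_x_ne_\<alpha>: "n \<in> {1..N} \<Longrightarrow> l < L \<Longrightarrow> fst (R n) - \<alpha> (block l) \<noteq> 0"
  using R_avoids_\<alpha> block_range by auto

lemma inj_on_snd_P: "i \<in> {1..m} \<Longrightarrow> inj_on (\<lambda>z. snd (P i z)) {1..q}"
  using inj_on_snd_if_fst_eq[OF inj_P] P_on_curve by blast

definition message :: "(nat \<Rightarrow> 'a) \<Rightarrow> 'a \<times> 'a \<Rightarrow> 'a" where
  "message d Q = (\<Sum>l<L. d l * snd Q ^ y_exponent l * poly (cofactor (block l)) (fst Q))"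

lemma message_in_RR: "message d \<in> RR (q * m + deg_answer)"
  unfolding message_def
proof (intro RR_sum)
  fix l assume "l \<in> {..<L}"
  hence i: "block l \<in> {1..m}" using block_range by simp
  have "(q + 1) * y_exponent l \<le> (q + 1) * (q - 1)"
    using y_exponent_le by (rule mult_le_mono2)
  also have "\<dots> = q * q - 1" by (simp add: algebra_simps)
  also have "\<dots> \<le> q + deg_answer"
    unfolding deg_answer_def deg_T_def two_genus using T_pos q_pos by (simp add: algebra_simps)
  moreover have "1 \<le> m" using i by simp
  hence "degree (cofactor (block l)) + 1 \<le> m" using degree_cofactor[OF i] by linarith
  hence "q * (degree (cofactor (block l)) + 1) \<le> q * m" by (rule mult_le_mono2)
  hence "q * degree (cofactor (block l)) + q \<le> q * m" by (simp add: distrib_left)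
  ultimately have "(q + 1) * y_exponent l + q * degree (cofactor (block l)) \<le> q * m + deg_answer"
    by linarith
  hence "RR ((q + 1) * y_exponent l + q * degree (cofactor (block l))) \<subseteq> RR (q * m + deg_answer)"
    by (rule RR_mono)
  moreover have "(\<lambda>Q. snd Q ^ y_exponent l * poly (cofactor (block l)) (fst Q))
      \<in> RR ((q + 1) * y_exponent l + q * degree (cofactor (block l)))"
    by (rule RR_mult[OF RR_snd_power RR_poly_fst])
  ultimately have "(\<lambda>Q. snd Q ^ y_exponent l * poly (cofactor (block l)) (fst Q)) \<in> RR (q * m + deg_answer)"
    by blast
  from RR_scale[OF this, of "d l"]
  show "(\<lambda>Q. d l * snd Q ^ y_exponent l * poly (cofactor (block l)) (fst Q)) \<in> RR (q * m + deg_answer)"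
    by (simp add: mult.assoc)
qed

text \<open>At \<open>x = \<alpha> i\<close> only the symbols of block \<open>i\<close> survive in a message, as a polynomial
  in \<open>y\<close> of degree less than \<open>q\<close>.\<close>
definition block_poly :: "(nat \<Rightarrow> 'a) \<Rightarrow> nat \<Rightarrow> 'a poly" where
  "block_poly d i = (\<Sum>l\<in>{l. l < L \<and> block l = i}. monom (d l) (y_exponent l))"

lemma degree_block_poly: "degree (block_poly d i) < q"
proof -
  have "degree (block_poly d i) \<le> q - 1" unfolding block_poly_def
    by (intro degree_sum_le order.trans[OF degree_monom_le] y_exponent_le) simp
  thus ?thesis using q_pos by simp
qed

lemma coeff_block_poly:
  assumes "l < L"
  shows "coeff (block_poly d (block l)) (y_exponent l) = d l"
proof -
  have "y_exponent l' = y_exponent l \<longleftrightarrow> l' = l" if "block l' = block l" for l'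
  proof
    assume "y_exponent l' = y_exponent l"
    moreover have "l' div q = l div q" using that unfolding block_def by simp
    ultimately show "l' = l" unfolding y_exponent_def by (metis div_mult_mod_eq)
  qed simp
  hence "coeff (block_poly d (block l)) (y_exponent l) = (\<Sum>l'\<in>{l'. l' < L \<and> block l' = block l}. if l' = l then d l' else 0)"
    unfolding block_poly_def coeff_sum coeff_monom by (intro sum.cong) auto
  also have "\<dots> = d l" using assms by simp
  finally show ?thesis .
qed

lemma message_at_\<alpha>:
  assumes "i \<in> {1..m}"
  shows "message d (\<alpha> i, y) = poly (block_poly d i) y * poly (cofactor i) (\<alpha> i)"
proof -
  have "message d (\<alpha> i, y) = (\<Sum>l\<in>{l. l < L \<and> block l = i}. d l * y ^ y_exponent l * poly (cofactor (block l)) (\<alpha> i))"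
    unfolding message_def fst_conv snd_conv using poly_cofactor_eq_0[OF assms block_range]
    by (intro sum.mono_neutral_right) auto
  thus ?thesis unfolding block_poly_def by (simp add: poly_sum poly_monom sum_distrib_right)
qed

text \<open>The block polynomial vanishes at the \<open>q\<close> distinct \<open>y\<close>-coordinates of the points \<open>P i z\<close>.\<close>
lemma message_eq_0:
  assumes vanish: "\<forall>Q\<in>H. message d Q + poly node_poly (fst Q) * h Q = 0" and "l < L"
  shows "d l = 0"
proof -
  define i where "i = block l"
  have i: "i \<in> {1..m}" using block_range[OF \<open>l < L\<close>] unfolding i_def .
  have "poly (block_poly d i) (snd (P i z)) = 0" if "z \<in> {1..q}" for z
  proof -
    have "(\<alpha> i, snd (P i z)) \<in> H" using P_on_curve i that by (metis prod.collapse)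
    hence "message d (\<alpha> i, snd (P i z)) + poly node_poly (\<alpha> i) * h (\<alpha> i, snd (P i z)) = 0"
      using vanish by (metis fst_conv)
    thus ?thesis using message_at_\<alpha>[OF i] poly_node_poly[OF i] poly_cofactor_ne_0[OF i] by simp
  qed
  hence "block_poly d i = 0"
    using poly_eq_0_if_card_roots[OF inj_on_snd_P[OF i]] degree_block_poly by simp
  thus ?thesis using coeff_block_poly[OF \<open>l < L\<close>, of d] unfolding i_def by simp
qed

text \<open>The relation the decoder inverts: \<open>d\<close> explains the answers \<open>As\<close> up to interference
  from \<open>RR deg_answer\<close>, after clearing the denominators \<open>x - \<alpha> i\<close> of the queries.\<close>
definition consistent :: "'a list \<Rightarrow> 'a list \<Rightarrow> bool" where
  "consistent As d \<longleftrightarrow> length d = L \<and> (\<exists>h\<in>RR deg_answer. \<forall>n\<in>{1..N}.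
     poly node_poly (fst (R n)) * As ! (n - 1) = message (nth d) (R n) + poly node_poly (fst (R n)) * h (R n))"

lemma consistent_unique:
  assumes "consistent As d" "consistent As d'"
  shows "d = d'"
proof -
  obtain h h' where h: "h \<in> RR deg_answer" "h' \<in> RR deg_answer"
    and eq: "\<forall>n\<in>{1..N}. message (nth d) (R n) + poly node_poly (fst (R n)) * h (R n)
                         = message (nth d') (R n) + poly node_poly (fst (R n)) * h' (R n)"
    using assms unfolding consistent_def by force
  define F where "F Q = message (\<lambda>l. d ! l - d' ! l) Q + poly node_poly (fst Q) * (h Q - h' Q)" for Q
  have F_eq: "F Q = (message (nth d) Q + poly node_poly (fst Q) * h Q)
      - (message (nth d') Q + poly node_poly (fst Q) * h' Q)" for Q
    unfolding F_def message_def by (simp add: algebra_simps sum_subtractf)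
  have "(\<lambda>Q. poly node_poly (fst Q)) \<in> RR (q * m)"
    using RR_poly_fst[of node_poly] RR_mono[of "q * degree node_poly" "q * m"] degree_node_poly by auto
  hence "(\<lambda>Q. poly node_poly (fst Q) * (h Q - h' Q)) \<in> RR (q * m + deg_answer)"
    using RR_mult RR_diff[OF h] by blast
  hence "F \<in> RR (q * m + deg_answer)" unfolding F_def using RR_add[OF message_in_RR] by blast
  moreover have "\<forall>Q\<in>R ` {1..N}. F Q = 0" using eq F_eq by auto
  moreover have "q * m + deg_answer < card (R ` {1..N})"
    using card_image[OF inj_R] N_gt unfolding deg_answer_def deg_X_def deg_T_def by simp
  ultimately have "\<forall>Q\<in>H. F Q = 0" using RR_eq_0_if_card_zeros_gt[OF _ R_on_curve] by blast
  hence "d ! l - d' ! l = 0" if "l < L" for l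
    using message_eq_0[of "\<lambda>l. d ! l - d' ! l" "\<lambda>Q. h Q - h' Q"] that unfolding F_def by blast
  thus ?thesis using assms unfolding consistent_def by (auto intro: nth_equalityI)
qed

text \<open>The mask of symbol \<open>(j, l)\<close> has the random coefficients \<open>Z (j, l, \<mu>)\<close> on the monomials of
  \<open>RR s\<close>; randomness is handed over as the list of all coefficients in a fixed enumeration of
  the index set.\<close>
definition symbols :: "nat \<Rightarrow> (nat \<times> nat) list" where
  "symbols M = List.product [1..<M + 1] [0..<L]"

definition mask_index :: "nat \<Rightarrow> nat \<Rightarrow> (nat \<times> nat \<times> (nat \<times> nat)) set" where
  "mask_index M s = {1..M} \<times> {0..<L} \<times> monomials s"

definition mask_poly :: "nat \<Rightarrow> (nat \<times> nat \<times> (nat \<times> nat) \<Rightarrow> 'a) \<Rightarrow> nat \<times> nat \<Rightarrow> 'a \<times> 'a \<Rightarrow> 'a" where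
  "mask_poly s Z jl Q = (\<Sum>\<mu>\<in>monomials s. Z (fst jl, snd jl, \<mu>) * monomial \<mu> Q)"

definition uniform_masks :: "nat \<Rightarrow> nat \<Rightarrow> 'a list pmf" where
  "uniform_masks M s = map_pmf (\<lambda>Z. map Z (enumeration (mask_index M s)))
     (pmf_of_set (PiE (mask_index M s) (\<lambda>_. UNIV)))"

definition masked :: "nat \<Rightarrow> nat \<Rightarrow> nat \<Rightarrow> (nat \<times> nat \<Rightarrow> 'a \<Rightarrow> 'a) \<Rightarrow> 'a list \<Rightarrow> 'a list" where
  "masked M s n f r = map (\<lambda>jl. f jl (mask_poly s (lookup (enumeration (mask_index M s)) r) jl (R n))) (symbols M)"

lemma set_symbols: "set (symbols M) = {1..M} \<times> {0..<L}"
  unfolding symbols_def by auto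

lemma finite_mask_index: "finite (mask_index M s)"
  unfolding mask_index_def using finite_monomials by simp

lemma masked_map:
  "masked M s n f (map Z (enumeration (mask_index M s))) = map (\<lambda>jl. f jl (mask_poly s Z jl (R n))) (symbols M)"
proof -
  have "mask_poly s (lookup (enumeration (mask_index M s)) (map Z (enumeration (mask_index M s)))) jl Q = mask_poly s Z jl Q"
    if "jl \<in> set (symbols M)" for jl Q
    unfolding mask_poly_def using that set_enumeration[OF finite_mask_index]
    by (intro sum.cong refl) (auto simp: lookup_map mask_index_def set_symbols)
  thus ?thesis unfolding masked_def by simp
qed

lemma set_pmf_uniform_masks:
  "set_pmf (uniform_masks M s) = (\<lambda>Z. map Z (enumeration (mask_index M s))) ` PiE (mask_index M s) (\<lambda>_. UNIV)"
  unfolding uniform_masks_def using finite_mask_index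
  by (simp add: set_pmf_of_set PiE_eq_empty_iff finite_PiE)

text \<open>The translation by \<open>t\<close> is, on the servers in \<open>S\<close>, itself the value of a mask, because
  \<open>RR s\<close> interpolates on \<open>R ` S\<close>; the uniform masks absorb it.\<close>
lemma masked_indistinguishable:
  assumes S: "S \<subseteq> {1..N}" "card S + 2 * genus \<le> s + 1"
    and shift: "\<And>n jl v. n \<in> S \<Longrightarrow> jl \<in> set (symbols M) \<Longrightarrow> f n jl v = g n jl (v + t jl (R n))"
  shows "map_pmf (\<lambda>r n. if n \<in> S then masked M s n (f n) r else []) (uniform_masks M s)
       = map_pmf (\<lambda>r n. if n \<in> S then masked M s n (g n) r else []) (uniform_masks M s)"
proof -
  have RS: "R ` S \<subseteq> H" using S(1) R_on_curve by auto
  have "card (R ` S) \<le> card S" by (rule card_image_le[OF finite_subset[OF S(1)]]) simp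
  hence card_RS: "card (R ` S) + 2 * genus \<le> s + 1" using S(2) by simp
  have "\<exists>c. \<forall>Q\<in>R ` S. t jl Q = (\<Sum>\<mu>\<in>monomials s. c \<mu> * monomial \<mu> Q)" for jl
    by (rule RR_interpolates[OF RS card_RS])
  hence "\<forall>jl. \<exists>c. \<forall>Q\<in>R ` S. t jl Q = (\<Sum>\<mu>\<in>monomials s. c \<mu> * monomial \<mu> Q)" by blast
  from choice[OF this] obtain c
    where c: "\<forall>jl. \<forall>Q\<in>R ` S. t jl Q = (\<Sum>\<mu>\<in>monomials s. c jl \<mu> * monomial \<mu> Q)" by blast
  define \<delta> where "\<delta> \<tau> = c (fst \<tau>, fst (snd \<tau>)) (snd (snd \<tau>))" for \<tau> :: "nat \<times> nat \<times> nat \<times> nat"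
  have mask_translate: "mask_poly s (translate_on (mask_index M s) \<delta> Z) jl (R n) = mask_poly s Z jl (R n) + t jl (R n)"
    if "n \<in> S" "jl \<in> set (symbols M)" for Z n jl
  proof -
    have "mask_poly s (translate_on (mask_index M s) \<delta> Z) jl (R n)
        = (\<Sum>\<mu>\<in>monomials s. (Z (fst jl, snd jl, \<mu>) + c jl \<mu>) * monomial \<mu> (R n))"
      unfolding mask_poly_def translate_on_def \<delta>_def using that(2)
      by (intro sum.cong refl) (auto simp: mask_index_def set_symbols)
    moreover have "t jl (R n) = (\<Sum>\<mu>\<in>monomials s. c jl \<mu> * monomial \<mu> (R n))"
      using c that(1) by blast
    ultimately show ?thesis by (simp add: mask_poly_def distrib_right sum.distrib)
  qed
  show ?thesis unfolding uniform_masks_def map_pmf_comp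
  proof (rule map_pmf_uniform_eq_if_translate[OF finite_mask_index])
    fix Z
    have "masked M s n (f n) (map Z (enumeration (mask_index M s)))
        = masked M s n (g n) (map (translate_on (mask_index M s) \<delta> Z) (enumeration (mask_index M s)))"
      if "n \<in> S" for n
      unfolding masked_map by (rule map_cong[OF refl]) (simp add: shift mask_translate that)
    thus "(\<lambda>n. if n \<in> S then masked M s n (f n) (map Z (enumeration (mask_index M s))) else []) =
      (\<lambda>n. if n \<in> S then masked M s n (g n) (map (translate_on (mask_index M s) \<delta> Z)
        (enumeration (mask_index M s))) else [])"
      by auto
  qed
qed

definition query_term :: "nat \<Rightarrow> nat \<times> nat \<Rightarrow> 'a \<times> 'a \<Rightarrow> 'a" where
  "query_term \<mu> jl Q = (if fst jl = \<mu> then snd Q ^ y_exponent (snd jl) / (fst Q - \<alpha> (block (snd jl))) else 0)"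

definition store :: "nat \<Rightarrow> nat \<Rightarrow> (nat \<Rightarrow> 'a list) \<Rightarrow> 'a list \<Rightarrow> 'a list" where
  "store M n D = masked M deg_X n (\<lambda>jl v. D (fst jl) ! snd jl + (fst (R n) - \<alpha> (block (snd jl))) * v)"

definition query :: "nat \<Rightarrow> nat \<Rightarrow> nat \<Rightarrow> 'a list \<Rightarrow> 'a list" where
  "query M n \<mu> = masked M deg_T n (\<lambda>jl v. query_term \<mu> jl (R n) + v)"

definition answer :: "nat \<Rightarrow> 'a list \<Rightarrow> 'a list \<Rightarrow> 'a" where
  "answer n w Q = sum_list (map2 (*) w Q)"

definition decode :: "nat \<Rightarrow> 'a list \<Rightarrow> 'a list \<Rightarrow> 'a list" where
  "decode \<mu> u As = (SOME d. consistent As d)"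

lemma store_secure:
  assumes "S \<subseteq> {1..N}" "card S \<le> X"
  shows "map_pmf (\<lambda>r n. if n \<in> S then store M n D r else []) (uniform_masks M deg_X) =
         map_pmf (\<lambda>r n. if n \<in> S then store M n D' r else []) (uniform_masks M deg_X)"
  unfolding store_def
proof (rule masked_indistinguishable[OF assms(1)])
  show "card S + 2 * genus \<le> deg_X + 1" using assms(2) X_pos unfolding deg_X_def by simp
  fix n jl v assume "n \<in> S" "jl \<in> set (symbols M)"
  hence "fst (R n) - \<alpha> (block (snd jl)) \<noteq> 0" using assms(1) R_x_ne_\<alpha> by (auto simp: set_symbols)
  thus "D (fst jl) ! snd jl + (fst (R n) - \<alpha> (block (snd jl))) * v
      = D' (fst jl) ! snd jl + (fst (R n) - \<alpha> (block (snd jl))) *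
          (v + (D (fst jl) ! snd jl - D' (fst jl) ! snd jl) / (fst (R n) - \<alpha> (block (snd jl))))"
    by (simp add: field_simps)
qed

lemma query_private:
  assumes "S \<subseteq> {1..N}" "card S \<le> T"
  shows "map_pmf (\<lambda>u n. if n \<in> S then query M n \<mu> u else []) (uniform_masks M deg_T) =
         map_pmf (\<lambda>u n. if n \<in> S then query M n \<mu>' u else []) (uniform_masks M deg_T)"
  unfolding query_def
proof (rule masked_indistinguishable[OF assms(1)])
  show "card S + 2 * genus \<le> deg_T + 1" using assms(2) T_pos unfolding deg_T_def by simp
  fix n jl v
  show "query_term \<mu> jl (R n) + v
      = query_term \<mu>' jl (R n) + (v + (query_term \<mu> jl (R n) - query_term \<mu>' jl (R n)))"
    by simp
qed

definition interference ::
  "nat \<Rightarrow> (nat \<Rightarrow> 'a list) \<Rightarrow> nat \<Rightarrow> (nat \<times> nat \<times> nat \<times> nat \<Rightarrow> 'a) \<Rightarrow> (nat \<times> nat \<times> nat \<times> nat \<Rightarrow> 'a) \<Rightarrow> 'a \<times> 'a \<Rightarrow> 'a"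
where
  "interference M D \<mu> Z Z' Q = (\<Sum>l<L. mask_poly deg_X Z (\<mu>, l) Q * snd Q ^ y_exponent l) +
     (\<Sum>jl\<in>{1..M} \<times> {0..<L}. D (fst jl) ! snd jl * mask_poly deg_T Z' jl Q
        + (fst Q - \<alpha> (block (snd jl))) * (mask_poly deg_X Z jl Q * mask_poly deg_T Z' jl Q))"

lemma mask_poly_in_RR: "mask_poly s Z jl \<in> RR s"
  unfolding mask_poly_def RR_def by (intro CollectI exI[of _ "\<lambda>\<mu>. Z (fst jl, snd jl, \<mu>)"]) simp

lemma interference_in_RR: "interference M D \<mu> Z Z' \<in> RR deg_answer"
proof -
  have "(\<lambda>Q. mask_poly deg_X Z (\<mu>, l) Q * snd Q ^ y_exponent l) \<in> RR deg_answer" for l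
  proof -
    have "(q + 1) * y_exponent l \<le> (q + 1) * (q - 1)" using y_exponent_le by (rule mult_le_mono2)
    also have "\<dots> \<le> deg_T + q" unfolding deg_T_def two_genus using T_pos by (simp add: algebra_simps)
    finally have "RR (deg_X + (q + 1) * y_exponent l) \<subseteq> RR deg_answer"
      unfolding deg_answer_def by (intro RR_mono) simp
    thus ?thesis using RR_mult[OF mask_poly_in_RR RR_snd_power] by blast
  qed
  moreover have "(\<lambda>Q. D (fst jl) ! snd jl * mask_poly deg_T Z' jl Q) \<in> RR deg_answer" for jl
  proof -
    have "RR deg_T \<subseteq> RR deg_answer" unfolding deg_answer_def by (intro RR_mono) simp
    thus ?thesis using RR_scale[OF mask_poly_in_RR] by blast
  qed
  moreover have "(\<lambda>Q. (fst Q - \<alpha> (block (snd jl))) * (mask_poly deg_X Z jl Q * mask_poly deg_T Z' jl Q))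
      \<in> RR deg_answer" for jl
  proof -
    have "(\<lambda>Q. fst Q ^ 1 - \<alpha> (block (snd jl))) \<in> RR q" using RR_diff[OF _ RR_const] RR_fst_power[of 1] by simp
    from RR_mult[OF this RR_mult[OF mask_poly_in_RR[of deg_X Z jl] mask_poly_in_RR[of deg_T Z' jl]]]
    have "(\<lambda>Q. (fst Q - \<alpha> (block (snd jl))) * (mask_poly deg_X Z jl Q * mask_poly deg_T Z' jl Q))
      \<in> RR (q + (deg_X + deg_T))" by simp
    moreover have "q + (deg_X + deg_T) = deg_answer" unfolding deg_answer_def by simp
    ultimately show ?thesis by simp
  qed
  ultimately show ?thesis unfolding interference_def by (intro RR_add RR_sum) auto
qed

lemma distinct_symbols: "distinct (symbols M)"
  unfolding symbols_def by (simp add: distinct_product)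

lemma answer_masked:
  "answer n (store M n D (map Z (enumeration (mask_index M deg_X))))
      (query M n \<mu> (map Z' (enumeration (mask_index M deg_T))))
   = (\<Sum>jl\<in>{1..M} \<times> {0..<L}. (D (fst jl) ! snd jl + (fst (R n) - \<alpha> (block (snd jl))) * mask_poly deg_X Z jl (R n))
        * (query_term \<mu> jl (R n) + mask_poly deg_T Z' jl (R n)))"
  unfolding answer_def store_def query_def masked_map map2_map_map
  by (simp add: sum_list_distinct_conv_sum_set[OF distinct_symbols] set_symbols)

text \<open>Only the desired file contributes a term outside \<open>RR deg_answer\<close>.\<close>
lemma answer_eq:
  assumes n: "n \<in> {1..N}" and \<mu>: "\<mu> \<in> {1..M}"
  shows "answer n (store M n D (map Z (enumeration (mask_index M deg_X))))
      (query M n \<mu> (map Z' (enumeration (mask_index M deg_T))))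
    = (\<Sum>l<L. D \<mu> ! l * snd (R n) ^ y_exponent l / (fst (R n) - \<alpha> (block l)))
      + interference M D \<mu> Z Z' (R n)"
proof -
  define x y where "x = fst (R n)" and "y = snd (R n)"
  define zX zT where "zX jl = mask_poly deg_X Z jl (R n)" and "zT jl = mask_poly deg_T Z' jl (R n)" for jl
  define g where "g l = D \<mu> ! l * y ^ y_exponent l / (x - \<alpha> (block l)) + zX (\<mu>, l) * y ^ y_exponent l" for l
  define k where "k jl = D (fst jl) ! snd jl * zT jl + (x - \<alpha> (block (snd jl))) * (zX jl * zT jl)" for jl
  have "(D (fst jl) ! snd jl + (x - \<alpha> (block (snd jl))) * zX jl) * (query_term \<mu> jl (R n) + zT jl)
      = (if fst jl = \<mu> then g (snd jl) else 0) + k jl" if "jl \<in> {1..M} \<times> {0..<L}" for jl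
  proof -
    have "snd jl < L" using that by auto
    hence "x - \<alpha> (block (snd jl)) \<noteq> 0" using R_x_ne_\<alpha>[OF n] unfolding x_def by blast
    thus ?thesis unfolding query_term_def g_def k_def x_def[symmetric] y_def[symmetric]
      by (cases jl) (simp add: field_simps)
  qed
  hence "answer n (store M n D (map Z (enumeration (mask_index M deg_X))))
      (query M n \<mu> (map Z' (enumeration (mask_index M deg_T))))
    = (\<Sum>jl\<in>{1..M} \<times> {0..<L}. if fst jl = \<mu> then g (snd jl) else 0) + (\<Sum>jl\<in>{1..M} \<times> {0..<L}. k jl)"
    unfolding answer_masked by (simp add: x_def[symmetric] zX_def[symmetric] zT_def[symmetric] sum.distrib)
  also have "(\<Sum>jl\<in>{1..M} \<times> {0..<L}. if fst jl = \<mu> then g (snd jl) else 0)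
      = (\<Sum>j\<in>{1..M}. \<Sum>l\<in>{0..<L}. if j = \<mu> then g l else 0)"
    by (simp add: sum.cartesian_product split_def)
  also have "\<dots> = (\<Sum>j\<in>{1..M}. if j = \<mu> then (\<Sum>l\<in>{0..<L}. g l) else 0)"
    by (intro sum.cong refl) simp
  also have "\<dots> = (\<Sum>l<L. g l)" using \<mu> by (simp add: atLeast0LessThan)
  also have "(\<Sum>l<L. g l) = (\<Sum>l<L. D \<mu> ! l * y ^ y_exponent l / (x - \<alpha> (block l)))
      + (\<Sum>l<L. zX (\<mu>, l) * y ^ y_exponent l)"
    unfolding g_def by (simp add: sum.distrib)
  moreover have "interference M D \<mu> Z Z' (R n)
      = (\<Sum>l<L. zX (\<mu>, l) * y ^ y_exponent l) + (\<Sum>jl\<in>{1..M} \<times> {0..<L}. k jl)"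
    unfolding interference_def k_def zX_def zT_def x_def y_def by simp
  ultimately show ?thesis unfolding x_def y_def by (simp add: add.assoc)
qed

lemma node_poly_mult_query_sum:
  assumes "n \<in> {1..N}"
  shows "poly node_poly (fst (R n)) * (\<Sum>l<L. d l * snd (R n) ^ y_exponent l / (fst (R n) - \<alpha> (block l)))
    = message d (R n)"
  unfolding message_def sum_distrib_left
proof (rule sum.cong[OF refl])
  fix l assume "l \<in> {..<L}"
  hence "fst (R n) - \<alpha> (block l) \<noteq> 0" using R_x_ne_\<alpha>[OF assms] by simp
  moreover have node: "poly node_poly (fst (R n)) = (fst (R n) - \<alpha> (block l)) * poly (cofactor (block l)) (fst (R n))"
    using poly_node_poly[OF block_range] \<open>l \<in> {..<L}\<close> by simp
  ultimately show "poly node_poly (fst (R n)) * (d l * snd (R n) ^ y_exponent l / (fst (R n) - \<alpha> (block l)))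
    = d l * snd (R n) ^ y_exponent l * poly (cofactor (block l)) (fst (R n))"
    unfolding node by (simp add: field_simps)
qed

lemma node_poly_mult_answer:
  assumes "n \<in> {1..N}" "\<mu> \<in> {1..M}"
  shows "poly node_poly (fst (R n)) * answer n (store M n D (map Z (enumeration (mask_index M deg_X))))
      (query M n \<mu> (map Z' (enumeration (mask_index M deg_T))))
    = message (nth (D \<mu>)) (R n) + poly node_poly (fst (R n)) * interference M D \<mu> Z Z' (R n)"
  unfolding answer_eq[OF assms] distrib_left node_poly_mult_query_sum[OF assms(1)] ..

lemma decode_correct:
  assumes "valid_files M L D" "\<mu> \<in> {1..M}" "r \<in> set_pmf (uniform_masks M deg_X)" "u \<in> set_pmf (uniform_masks M deg_T)"
  shows "decode \<mu> u (map (\<lambda>n. answer n (store M n D r) (query M n \<mu> u)) [1..<N + 1]) = D \<mu>"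
proof -
  obtain Z Z' where r: "r = map Z (enumeration (mask_index M deg_X))"
    and u: "u = map Z' (enumeration (mask_index M deg_T))"
    using assms(3,4) unfolding set_pmf_uniform_masks by blast
  let ?As = "map (\<lambda>n. answer n (store M n D r) (query M n \<mu> u)) [1..<N + 1]"
  have "?As ! (n - 1) = answer n (store M n D r) (query M n \<mu> u)" if "n \<in> {1..N}" for n
  proof -
    have "n - 1 < length [1..<N + 1]" "[1..<N + 1] ! (n - 1) = n" using that by (auto simp del: upt_Suc)
    thus ?thesis by (simp only: nth_map)
  qed
  hence "consistent ?As (D \<mu>)"
    using assms(1,2) node_poly_mult_answer[OF _ assms(2)] interference_in_RR r u
    unfolding consistent_def valid_files_def by auto
  thus ?thesis unfolding decode_def using consistent_unique someI by metis
qed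

theorem scheme: "XSTPIR N M L X T (uniform_masks M deg_X) (store M) (uniform_masks M deg_T) (query M) answer decode"
  unfolding XSTPIR_def using decode_correct store_secure query_private by blast

end

theorem theorem3p3:
  fixes q X T L m N :: nat
    and \<alpha> :: "nat \<Rightarrow> 'a::{finite,field}"
    and P :: "nat \<Rightarrow> nat \<Rightarrow> 'a \<times> 'a"
  assumes "\<exists>p k. prime p \<and> k > 0 \<and> q = p ^ k"
    and "CARD('a) = q ^ 2"
    and "X > 0" and "T > 0"
    and "q * (q - 1) div 2 \<le> L" and "L \<le> q ^ 3 - q * (q - 1) div 2"
    and "q dvd (L + q * (q - 1) div 2)"
    and "m = (L + q * (q - 1) div 2) div q"
    and "inj_on \<alpha> {1..m}" and "\<forall>i\<in>{1..m}. \<alpha> i \<noteq> 0"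
    and "\<forall>i\<in>{1..m}. \<forall>z\<in>{1..q}. P i z \<in> hermitian_affine q \<and> fst (P i z) = \<alpha> i"
    and "inj_on (\<lambda>(i, z). P i z) ({1..m} \<times> {1..q})"
    and "card (hermitian_affine q - {(0, 0)} - (\<lambda>(i, z). P i z) ` ({1..m} \<times> {1..q}))
           \<ge> L + X + T + (7 * q ^ 2 - 3 * q - 6) div 2 + 1"
    and "N = L + X + T + 3 * q ^ 2 - q - 2"
  shows "(\<forall>M \<ge> 1. \<exists>srand store qrand query answer decode.
            XSTPIR N M L X T srand store (qrand :: 'a list pmf) query answer decode)
         \<and> real L / real N = 1 - real (X + T + 3 * q ^ 2 - q - 2) / real N"
proof -
  interpret hermitian_curve q "TYPE('a)" using assms(1,2) by unfold_locales
  have qm: "q * m = L + genus" using assms(7,8) unfolding genus_def by simp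
  note params = xstpir_parameters[OF qm assms(14)]
  have "N \<le> card (H - {(0, 0)} - (\<lambda>(i, z). P i z) ` ({1..m} \<times> {1..q}))"
    using params(2) assms(13) by linarith
  then obtain R where R: "inj_on R {1..N}" "R ` {1..N} \<subseteq> H" "\<forall>n\<in>{1..N}. \<forall>i\<in>{1..m}. fst (R n) \<noteq> \<alpha> i"
    by (rule exists_evaluation_points[OF assms(11,12)])
  interpret xstpir_construction q "TYPE('a)" L X T m N \<alpha> P R
    using assms(3,4,9,11,12) qm params(1) R by unfold_locales auto
  have "real N = real L + real (X + T + 3 * q ^ 2 - q - 2)" using params(3) by simp
  moreover have "0 < N" using params(1) by linarith
  ultimately have "real L / real N = 1 - real (X + T + 3 * q ^ 2 - q - 2) / real N" by (simp add: field_simps)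
  thus ?thesis using scheme by blast
qed

end
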